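(* For any signature $\Sigma$, the quadruple consisting of the class of $\Sigma$-forest-like alphabets, the disjoint sum operation $\mathbin{+\!\!+}$, the maps $r_A$, and the alphabet $A_p(\Sigma)$ is a polynomial realization of the Hopf algebra $\mathbf N(T(\Sigma))$. That is: (i) $\mathbin{+\!\!+}$ is associative; (ii) for every $\Sigma$-forest-like alphabet $A$, $r_A:\mathbf N(T(\Sigma))\to\mathbb K\langle A\rangle$ is a graded unital associative algebra morphism; (iii) for all $\Sigma$-forest-like alphabets $A_1,A_2$ and every $x\in\mathbf N(T(\Sigma))$, $\theta_{A_1,A_2}(r_{A_1\mathbin{+\!\!+}A_2}(x))=(r_{A_1}\otimes r_{A_2})(\Delta x)$; (iv) $r_{A_p(\Sigma)}$ is injective.
   Context: $\mathbb K$ is a field of characteristic zero; $[P]$ is $1$ if $P$ holds, $0$ otherwise. A signature is a set $\Sigma$ with arity map $|\cdot|:\Sigma\to\mathbb N$. A $\Sigma$-term is the leaf $\bot$ or $s(t_1,\dots,t_n)$ with $s$ of arity $n$, $t_i$ terms; degree = number of internal nodes, arity $|t|$ = number of leaves. $T(\Sigma)$ is the free operad: $t[t_1,\dots,t_{|t|}]$ grafts $t_i$ on the $i$-th leaf of $t$. A $\Sigma$-forest is a finite word of terms; reduced if no term is $\bot$; $\mathrm{rd}$ deletes terms equal to $\bot$. Internal nodes of a forest $f$ are identified with $1,\dots,\deg f$ by preorder; $d_f(i)$ decoration of $i$; $i\to^f_j i'$ means $i'$ is the $j$-th child of $i$; roots are the roots of terms. $\mathbf N(T(\Sigma))$: basis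 $E_f$ ($f$ reduced), product $E_{f_1}E_{f_2}=E_{f_1f_2}$, grading $\deg f$, coproduct the algebra morphism with $\Delta E_t=\sum E_{\mathrm{rd}(t')}\otimes E_{\mathrm{rd}(t_1\cdots t_{|t'|})}$ over all $t',t_1,\dots$ with $t=t'[t_1,\dots,t_{|t'|}]$. A $\Sigma$-forest-like alphabet is a set $A$ with arbitrary: subset $R^A$, subsets $D^A_s$ ($s\in\Sigma$), binary relations $\to^A_j$ ($j\ge1$). $\mathbb K\langle A\rangle$: noncommutative polynomials over $A$ with possibly infinite support and bounded degree. A word $w\in A^*$ is $A$-compatible with $f$ if it has length $\deg f$, $w(i)\in R^A$ for each root $i$, $w(i)\in D^A_{d_f(i)}$ for each $i$, and $i\to^f_j i'$ implies $w(i)\to^A_j w(i')$. $r_A(E_f)=\sum_{w\in A^*}[w\ A\text{-compatible with }f]\,w$. The disjoint sum $A_1\mathbin{+\!\!+}A_2$ is $A_1\sqcup A_2$ with $R=R^{A_1}\sqcup R^{A_2}$, $D_s=D^{A_1}_s\sqcup D^{A_2}_s$, and $a\to_j a'$ iff ($a,a'\in A_1$, $a\to^{A_1}_j a'$) or ($a,a'\in A_2$, $a\to^{A_2}_j a'$) or ($a\in A_1$, $a'\in A_2$, $a'\in R^{A_2}$). $\theta_{A_1,A_2}$ is the linear map $w\mapsto w_{|A_1}\otimes w_{|A_2}$. The alphabet of positions $A_p(\Sigma)=\{a^s_u:s\in\Sigma,u\in\mathbb N^*\}$ has root relation $\{a^s_{0^\ell}\}$, $D_s=\{a^s_u:u\in\mathbb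 N^*\}$, and $a^s_u\to_j a^{s'}_v$ iff $v=u\,j\,0^\ell$ for some $\ell\in\mathbb N$. *)

theory Defs
  imports Main
begin

datatype 's tm = Leaf | Node 's "'s tm list"

fun wf_tm :: "'s set \<Rightarrow> ('s \<Rightarrow> nat) \<Rightarrow> 's tm \<Rightarrow> bool" where
  "wf_tm S ar Leaf = True"
| "wf_tm S ar (Node s ts) = (s \<in> S \<and> length ts = ar s \<and> (\<forall>t\<in>set ts. wf_tm S ar t))"

fun deg :: "'s tm \<Rightarrow> nat" where
  "deg Leaf = 0"
| "deg (Node s ts) = Suc (sum_list (map deg ts))"

fun nlv :: "'s tm \<Rightarrow> nat" where
  "nlv Leaf = 1"
| "nlv (Node s ts) = sum_list (map nlv ts)"

text \<open>Grafting: graft t [t1,...,tn] grafts ti on the i-th leaf of t (n = nlv t).\<close>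
fun graft :: "'s tm \<Rightarrow> 's tm list \<Rightarrow> 's tm"
and graftl :: "'s tm list \<Rightarrow> 's tm list \<Rightarrow> 's tm list" where
  "graft Leaf us = (case us of [] \<Rightarrow> Leaf | u # _ \<Rightarrow> u)"
| "graft (Node s ts) us = Node s (graftl ts us)"
| "graftl [] us = []"
| "graftl (t # ts) us = graft t (take (nlv t) us) # graftl ts (drop (nlv t) us)"

type_synonym 's forest = "'s tm list"

definition wf_forest :: "'s set \<Rightarrow> ('s \<Rightarrow> nat) \<Rightarrow> 's forest \<Rightarrow> bool" where
  "wf_forest S ar f \<longleftrightarrow> (\<forall>t\<in>set f. wf_tm S ar t)"

definition reduced :: "'s forest \<Rightarrow> bool" where
  "reduced f \<longleftrightarrow> Leaf \<notin> set f"

definition rd :: "'s forest \<Rightarrow> 's forest" where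
  "rd f = filter (\<lambda>t. t \<noteq> Leaf) f"

definition fdeg :: "'s forest \<Rightarrow> nat" where
  "fdeg f = sum_list (map deg f)"

text \<open>Preorder numbering of internal nodes.  pre n t lists the internal nodes
  of t in preorder, the root of t getting number n; each entry records the
  decoration and, for the j-th child (j = 1, 2, ... = position in the list + 1),
  Some (number of that child) if the child is an internal node, None if it is a leaf.\<close>
fun pre :: "nat \<Rightarrow> 's tm \<Rightarrow> ('s \<times> nat option list) list"
and prel :: "nat \<Rightarrow> 's tm list \<Rightarrow> nat option list \<times> ('s \<times> nat option list) list" where
  "pre n Leaf = []"
| "pre n (Node s ts) = (case prel (Suc n) ts of (cs, rest) \<Rightarrow> (s, cs) # rest)"
| "prel n [] = ([], [])"
| "prel n (t # ts) = (case prel (n + deg t) ts of (cs, rest) \<Rightarrow>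
      ((if t = Leaf then None else Some n) # cs, pre n t @ rest))"

text \<open>Nodes of a forest, numbered 1..fdeg f in preorder.\<close>
fun fnodes_from :: "nat \<Rightarrow> 's forest \<Rightarrow> ('s \<times> nat option list) list" where
  "fnodes_from n [] = []"
| "fnodes_from n (t # ts) = pre n t @ fnodes_from (n + deg t) ts"

fun froots_from :: "nat \<Rightarrow> 's forest \<Rightarrow> nat set" where
  "froots_from n [] = {}"
| "froots_from n (t # ts) = (if t = Leaf then {} else {n}) \<union> froots_from (n + deg t) ts"

definition fnodes :: "'s forest \<Rightarrow> ('s \<times> nat option list) list" where
  "fnodes f = fnodes_from 1 f"

definition froots :: "'s forest \<Rightarrow> nat set" where
  "froots f = froots_from 1 f"

definition dec :: "'s forest \<Rightarrow> nat \<Rightarrow> 's" where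
  "dec f i = fst (fnodes f ! (i - 1))"

definition child :: "'s forest \<Rightarrow> nat \<Rightarrow> nat \<Rightarrow> nat \<Rightarrow> bool" where
  "child f i j i' \<longleftrightarrow> 1 \<le> i \<and> i \<le> fdeg f \<and> 1 \<le> j \<and> j \<le> length (snd (fnodes f ! (i - 1)))
      \<and> snd (fnodes f ! (i - 1)) ! (j - 1) = Some i'"

text \<open>An element of N(T(Sigma)) is a finitely supported function on forests,
  supported on reduced Sigma-forests: x = sum_f (x f) E_f.\<close>
definition N_elem :: "'s set \<Rightarrow> ('s \<Rightarrow> nat) \<Rightarrow> ('s forest \<Rightarrow> 'k::field_char_0) \<Rightarrow> bool" where
  "N_elem S ar x \<longleftrightarrow> finite {f. x f \<noteq> 0} \<and>
     (\<forall>f. x f \<noteq> 0 \<longrightarrow> wf_forest S ar f \<and> reduced f)"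

definition basisE :: "'s forest \<Rightarrow> ('s forest \<Rightarrow> 'k::field_char_0)" where
  "basisE f = (\<lambda>g. if g = f then 1 else 0)"

text \<open>product E_f1 E_f2 = E_(f1 f2), extended bilinearly; the unit is E_[]\<close>
definition N_mult :: "('s forest \<Rightarrow> 'k::field_char_0) \<Rightarrow> ('s forest \<Rightarrow> 'k) \<Rightarrow> ('s forest \<Rightarrow> 'k)" where
  "N_mult x y = (\<lambda>h. \<Sum>i\<le>length h. x (take i h) * y (drop i h))"

definition N_unit :: "'s forest \<Rightarrow> 'k::field_char_0" where
  "N_unit = basisE []"

definition N_homog :: "nat \<Rightarrow> ('s forest \<Rightarrow> 'k::field_char_0) \<Rightarrow> bool" where
  "N_homog n x \<longleftrightarrow> (\<forall>f. x f \<noteq> 0 \<longrightarrow> fdeg f = n)"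

definition decomps :: "'s set \<Rightarrow> ('s \<Rightarrow> nat) \<Rightarrow> 's tm \<Rightarrow> ('s tm \<times> 's tm list) set" where
  "decomps S ar t = {(t', us). wf_tm S ar t' \<and> (\<forall>u\<in>set us. wf_tm S ar u)
      \<and> length us = nlv t' \<and> graft t' us = t}"

text \<open>Coproduct on basis elements: Delta E_t = sum over decompositions of
  E_rd(t') (x) E_rd(t1...tk); on a forest f = t_1...t_n, Delta is multiplicative,
  Delta E_f = prod_i Delta E_(t_i), with (a (x) b)(c (x) d) = ac (x) bd.
  Expanding this product: the coefficient of E_g (x) E_h counts the tuples of
  decompositions (one for each t_i) producing g and h.\<close>
definition Delta_basis :: "'s set \<Rightarrow> ('s \<Rightarrow> nat) \<Rightarrow> 's forest \<Rightarrow> ('s forest \<times> 's forest \<Rightarrow> 'k::field_char_0)" where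
  "Delta_basis S ar f = (\<lambda>(g, h). of_nat (card {ds. length ds = length f
      \<and> (\<forall>i<length f. ds ! i \<in> decomps S ar (f ! i))
      \<and> concat (map (\<lambda>d. rd [fst d]) ds) = g
      \<and> concat (map (\<lambda>d. rd (snd d)) ds) = h}))"

text \<open>Delta extended linearly; elements of N (x) N are finitely supported
  functions on pairs of forests.\<close>
definition Delta :: "'s set \<Rightarrow> ('s \<Rightarrow> nat) \<Rightarrow> ('s forest \<Rightarrow> 'k::field_char_0) \<Rightarrow> ('s forest \<times> 's forest \<Rightarrow> 'k)" where
  "Delta S ar x = (\<lambda>p. \<Sum>f\<in>{f. x f \<noteq> 0}. x f * Delta_basis S ar f p)"

record ('s, 'a) fla =
  carrier :: "'a set"
  Rt :: "'a set"
  Dc :: "'s \<Rightarrow> 'a set"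
  Ar :: "nat \<Rightarrow> 'a \<Rightarrow> 'a \<Rightarrow> bool"

text \<open>A Sigma-forest-like alphabet: a set A with a subset R^A, subsets D^A_s
  (s in Sigma) and binary relations ->_j on A (only j >= 1 is used).\<close>
definition is_fla :: "'s set \<Rightarrow> ('s, 'a) fla \<Rightarrow> bool" where
  "is_fla S A \<longleftrightarrow> Rt A \<subseteq> carrier A \<and> (\<forall>s\<in>S. Dc A s \<subseteq> carrier A)
     \<and> (\<forall>j a a'. Ar A j a a' \<longrightarrow> a \<in> carrier A \<and> a' \<in> carrier A)"

definition fla_sum :: "('s, 'a) fla \<Rightarrow> ('s, 'b) fla \<Rightarrow> ('s, 'a + 'b) fla" where
  "fla_sum A1 A2 = \<lparr> carrier = Inl ` carrier A1 \<union> Inr ` carrier A2,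
     Rt = Inl ` Rt A1 \<union> Inr ` Rt A2,
     Dc = (\<lambda>s. Inl ` Dc A1 s \<union> Inr ` Dc A2 s),
     Ar = (\<lambda>j x y. case (x, y) of
        (Inl a, Inl a') \<Rightarrow> Ar A1 j a a'
      | (Inr a, Inr a') \<Rightarrow> Ar A2 j a a'
      | (Inl a, Inr a') \<Rightarrow> a \<in> carrier A1 \<and> a' \<in> Rt A2
      | (Inr a, Inl a') \<Rightarrow> False) \<rparr>"

text \<open>Transport of an alphabet along a map (used with the canonical bijection
  (A1 ++ A2) ++ A3 = A1 ++ (A2 ++ A3)).\<close>
definition fla_map :: "('a \<Rightarrow> 'b) \<Rightarrow> ('s, 'a) fla \<Rightarrow> ('s, 'b) fla" where
  "fla_map g A = \<lparr> carrier = g ` carrier A, Rt = g ` Rt A, Dc = (\<lambda>s. g ` Dc A s),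
     Ar = (\<lambda>j b b'. \<exists>a a'. b = g a \<and> b' = g a' \<and> Ar A j a a') \<rparr>"

fun sum_assoc :: "('a + 'b) + 'c \<Rightarrow> 'a + ('b + 'c)" where
  "sum_assoc (Inl (Inl a)) = Inl a"
| "sum_assoc (Inl (Inr b)) = Inr (Inl b)"
| "sum_assoc (Inr c) = Inr (Inr c)"

text \<open>Possibly infinite support, bounded degree; elements are functions from words to K.\<close>
definition kpoly :: "('s, 'a) fla \<Rightarrow> ('a list \<Rightarrow> 'k::field_char_0) \<Rightarrow> bool" where
  "kpoly A p \<longleftrightarrow> (\<forall>w. p w \<noteq> 0 \<longrightarrow> set w \<subseteq> carrier A)
     \<and> (\<exists>n. \<forall>w. p w \<noteq> 0 \<longrightarrow> length w \<le> n)"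

definition poly_mult :: "('a list \<Rightarrow> 'k::field_char_0) \<Rightarrow> ('a list \<Rightarrow> 'k) \<Rightarrow> ('a list \<Rightarrow> 'k)" where
  "poly_mult p q = (\<lambda>w. \<Sum>i\<le>length w. p (take i w) * q (drop i w))"

definition poly_one :: "'a list \<Rightarrow> 'k::field_char_0" where
  "poly_one = (\<lambda>w. if w = [] then 1 else 0)"

definition poly_homog :: "nat \<Rightarrow> ('a list \<Rightarrow> 'k::field_char_0) \<Rightarrow> bool" where
  "poly_homog n p \<longleftrightarrow> (\<forall>w. p w \<noteq> 0 \<longrightarrow> length w = n)"

definition compatible :: "('s, 'a) fla \<Rightarrow> 's forest \<Rightarrow> 'a list \<Rightarrow> bool" where
  "compatible A f w \<longleftrightarrow> length w = fdeg f \<and> set w \<subseteq> carrier A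
     \<and> (\<forall>i\<in>froots f. w ! (i - 1) \<in> Rt A)
     \<and> (\<forall>i. 1 \<le> i \<and> i \<le> fdeg f \<longrightarrow> w ! (i - 1) \<in> Dc A (dec f i))
     \<and> (\<forall>i j i'. child f i j i' \<longrightarrow> Ar A j (w ! (i - 1)) (w ! (i' - 1)))"

definition r_basis :: "('s, 'a) fla \<Rightarrow> 's forest \<Rightarrow> ('a list \<Rightarrow> 'k::field_char_0)" where
  "r_basis A f = (\<lambda>w. if compatible A f w then 1 else 0)"

definition r_map :: "('s, 'a) fla \<Rightarrow> ('s forest \<Rightarrow> 'k::field_char_0) \<Rightarrow> ('a list \<Rightarrow> 'k)" where
  "r_map A x = (\<lambda>w. \<Sum>f\<in>{f. x f \<noteq> 0}. x f * r_basis A f w)"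

text \<open>theta_{A1,A2}: w \<mapsto> w|A1 (x) w|A2, extended linearly; the target is
  represented by functions on pairs of words.\<close>
definition restr_l :: "('a + 'b) list \<Rightarrow> 'a list" where
  "restr_l w = concat (map (case_sum (\<lambda>a. [a]) (\<lambda>_. [])) w)"

definition restr_r :: "('a + 'b) list \<Rightarrow> 'b list" where
  "restr_r w = concat (map (case_sum (\<lambda>_. []) (\<lambda>b. [b])) w)"

definition theta :: "(('a + 'b) list \<Rightarrow> 'k::field_char_0) \<Rightarrow> ('a list \<times> 'b list \<Rightarrow> 'k)" where
  "theta p = (\<lambda>(u, v). \<Sum>w\<in>{w. restr_l w = u \<and> restr_r w = v}. p w)"

definition r_tensor :: "('s, 'a) fla \<Rightarrow> ('s, 'b) fla \<Rightarrow> ('s forest \<times> 's forest \<Rightarrow> 'k::field_char_0)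
    \<Rightarrow> ('a list \<times> 'b list \<Rightarrow> 'k)" where
  "r_tensor A1 A2 z = (\<lambda>(u, v). \<Sum>p\<in>{p. z p \<noteq> 0}.
      z p * r_basis A1 (fst p) u * r_basis A2 (snd p) v)"

definition A_pos :: "'s set \<Rightarrow> ('s, 's \<times> nat list) fla" where
  "A_pos S = \<lparr> carrier = {(s, u). s \<in> S},
     Rt = {(s, replicate l 0) | s l. s \<in> S},
     Dc = (\<lambda>s. if s \<in> S then {(s, u) | u. True} else {}),
     Ar = (\<lambda>j (s, u) (s', v). s \<in> S \<and> s' \<in> S \<and> (\<exists>l. v = u @ [j] @ replicate l 0)) \<rparr>"

end

(*
  Compatibility of a word with a forest only relates the letters of adjacent nodes, so it
  can be checked term by term and child by child.  In particular a word is compatible with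
  f1 f2 iff it is a word compatible with f1 followed by one compatible with f2, which makes
  r_A multiplicative.

  Over A1 ++ A2 no letter of A1 lies below a letter of A2, and an edge from A1 to A2 only
  asks the lower letter to be a root of A2.  Hence in a word compatible with a term t the
  letters of A1 occupy an upper part t' of t = t'[t1, ..., tk] and those of A2 the grafted
  terms: the word is the interleaving, along the mask telling which nodes belong to t', of a
  word over A1 compatible with rd t' and a word over A2 compatible with rd (t1 ... tk).
  Counting these interleavings gives theta (r x) = (r_A1 tensor r_A2) (Delta x).

  Over the alphabet of positions, labelling each node of f by its decoration and its path
  from the root gives a word compatible with f, and the positions in it determine the shape
  of every reduced forest compatible with it; so r(x) evaluated at that word is x f.
*)

theory Submission
  imports Defs
begin

section \<open>Compatibility as a recursive condition\<close>

text \<open>\<open>tree_compat A P t w\<close>: \<open>w\<close> is compatible with the term \<open>t\<close>, except that the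
  root letter has to satisfy \<open>P\<close> instead of lying in \<open>R\<^sup>A\<close>.
  \<open>trees_compat A a j ts w\<close>: \<open>w\<close> is compatible with the terms \<open>ts\<close> hanging below a
  node with letter \<open>a\<close> as its children number \<open>j, j + 1, \<dots>\<close>.\<close>

fun tree_compat :: "('s, 'a) fla \<Rightarrow> ('a \<Rightarrow> bool) \<Rightarrow> 's tm \<Rightarrow> 'a list \<Rightarrow> bool"
and trees_compat :: "('s, 'a) fla \<Rightarrow> 'a \<Rightarrow> nat \<Rightarrow> 's tm list \<Rightarrow> 'a list \<Rightarrow> bool" where
  "tree_compat A P Leaf w \<longleftrightarrow> w = []"
| "tree_compat A P (Node s ts) w \<longleftrightarrow> (case w of [] \<Rightarrow> False | a # w' \<Rightarrow>
     a \<in> carrier A \<and> P a \<and> a \<in> Dc A s \<and> trees_compat A a 1 ts w')"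
| "trees_compat A a j [] w \<longleftrightarrow> w = []"
| "trees_compat A a j (t # ts) w \<longleftrightarrow>
     tree_compat A (Ar A j a) t (take (deg t) w) \<and> trees_compat A a (Suc j) ts (drop (deg t) w)"

fun forest_compat :: "('s, 'a) fla \<Rightarrow> 's forest \<Rightarrow> 'a list \<Rightarrow> bool" where
  "forest_compat A [] w \<longleftrightarrow> w = []"
| "forest_compat A (t # ts) w \<longleftrightarrow>
     tree_compat A (\<lambda>a. a \<in> Rt A) t (take (deg t) w) \<and> forest_compat A ts (drop (deg t) w)"

lemma fdeg_Nil [simp]: "fdeg [] = 0"
  and fdeg_Cons [simp]: "fdeg (t # ts) = deg t + fdeg ts"
  and fdeg_append [simp]: "fdeg (f @ g) = fdeg f + fdeg g"
  by (simp_all add: fdeg_def)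

lemma deg_pos: "t \<noteq> Leaf \<Longrightarrow> 0 < deg t"
  by (cases t) auto

lemma tree_compat_length:
  "tree_compat A P t w \<Longrightarrow> length w = deg t"
  "trees_compat A a j ts w \<Longrightarrow> length w = sum_list (map deg ts)"
proof (induction A P t w and A a j ts w rule: tree_compat_trees_compat.induct)
  case (2 A P s ts w)
  then show ?case by (cases w) auto
next
  case (4 A a j t ts w)
  then have "length (take (deg t) w) = deg t" by simp
  with 4 show ?case by simp
qed auto

lemma forest_compat_length: "forest_compat A f w \<Longrightarrow> length w = fdeg f"
proof (induction f arbitrary: w)
  case (Cons t ts)
  then have "length (take (deg t) w) = deg t" by (auto dest: tree_compat_length)
  with Cons.IH[of "drop (deg t) w"] Cons.prems show ?case by simp
qed simp

lemma forest_compat_append: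
  "forest_compat A (f1 @ f2) w \<longleftrightarrow> forest_compat A f1 (take (fdeg f1) w) \<and> forest_compat A f2 (drop (fdeg f1) w)"
proof (induction f1 arbitrary: w)
  case (Cons t f1)
  have "drop (deg t) (take (deg t + fdeg f1) w) = take (fdeg f1) (drop (deg t) w)"
    by (simp add: drop_take)
  with Cons.IH[of "drop (deg t) w"] show ?case by (simp add: min_def add.commute)
qed simp

lemma forest_compat_single: "forest_compat A [t] v \<longleftrightarrow> tree_compat A (\<lambda>a. a \<in> Rt A) t v"
  using tree_compat_length(1)[of A _ t v] by fastforce

text \<open>To relate the preorder numbering to the recursion, a list of numbered nodes is
  tracked together with a range containing the numbers of all their children.\<close>

definition children_in :: "nat \<Rightarrow> nat \<Rightarrow> ('s \<times> nat option list) list \<Rightarrow> bool" where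
  "children_in lo hi L \<longleftrightarrow> (\<forall>e\<in>set L. \<forall>i. Some i \<in> set (snd e) \<longrightarrow> lo \<le> i \<and> i < hi)"

lemma children_in_mono: "children_in lo hi L \<Longrightarrow> lo' \<le> lo \<Longrightarrow> hi \<le> hi' \<Longrightarrow> children_in lo' hi' L"
  unfolding children_in_def by fastforce

lemma children_in_simps [simp]:
  "children_in lo hi []"
  "children_in lo hi (e # L) \<longleftrightarrow> (\<forall>i. Some i \<in> set (snd e) \<longrightarrow> lo \<le> i \<and> i < hi) \<and> children_in lo hi L"
  "children_in lo hi (L1 @ L2) \<longleftrightarrow> children_in lo hi L1 \<and> children_in lo hi L2"
  unfolding children_in_def by auto

lemma pre_prel_bounds:
  fixes t :: "'s tm" and ts :: "'s tm list"
  shows "length (pre n t) = deg t \<and> children_in (Suc n) (n + deg t) (pre n t)"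
    "length (fst (prel m ts)) = length ts \<and> length (snd (prel m ts)) = sum_list (map deg ts)
      \<and> children_in (Suc m) (m + sum_list (map deg ts)) (snd (prel m ts))
      \<and> (\<forall>i. Some i \<in> set (fst (prel m ts)) \<longrightarrow> m \<le> i \<and> i < m + sum_list (map deg ts))"
proof (induction n t and m ts rule: pre_prel.induct)
  case (2 n s ts)
  obtain cs rest where "prel (Suc n) ts = (cs, rest)" by (cases "prel (Suc n) ts")
  with 2 show ?case by (auto intro: children_in_mono)
next
  case (4 n t ts)
  obtain cs rest where "prel (n + deg t) ts = (cs, rest)" by (cases "prel (n + deg t) ts")
  with 4 deg_pos[of t] show ?case by (auto intro: children_in_mono)
qed auto

lemma fnodes_from_bounds:
  "length (fnodes_from n f) = fdeg f \<and> children_in (Suc n) (n + fdeg f) (fnodes_from n f)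
   \<and> (\<forall>i\<in>froots_from n f. n \<le> i \<and> i < n + fdeg f)"
proof (induction f arbitrary: n)
  case (Cons t ts)
  have "length (fnodes_from (n + deg t) ts) = fdeg ts"
    "children_in (Suc (n + deg t)) (n + deg t + fdeg ts) (fnodes_from (n + deg t) ts)"
    "\<forall>i\<in>froots_from (n + deg t) ts. n + deg t \<le> i \<and> i < n + deg t + fdeg ts"
    using Cons[of "n + deg t"] by auto
  with pre_prel_bounds(1)[of n t] deg_pos[of t] show ?case by (auto intro: children_in_mono)
qed simp

definition node_compat :: "('s, 'a) fla \<Rightarrow> nat \<Rightarrow> ('s \<times> nat option list) list \<Rightarrow> 'a list \<Rightarrow> nat \<Rightarrow> bool" where
  "node_compat A n L w k \<longleftrightarrow> w!k \<in> Dc A (fst (L!k)) \<and>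
    (\<forall>j<length (snd (L!k)). \<forall>i'. snd (L!k)!j = Some i' \<longrightarrow> Ar A (Suc j) (w!k) (w!(i' - n)))"

definition nodes_compat :: "('s, 'a) fla \<Rightarrow> nat \<Rightarrow> ('s \<times> nat option list) list \<Rightarrow> 'a list \<Rightarrow> bool" where
  "nodes_compat A n L w \<longleftrightarrow> length w = length L \<and> set w \<subseteq> carrier A \<and> (\<forall>k<length L. node_compat A n L w k)"

lemma children_in_nth:
  "children_in lo hi L \<Longrightarrow> k < length L \<Longrightarrow> j < length (snd (L!k)) \<Longrightarrow> snd (L!k)!j = Some i
   \<Longrightarrow> lo \<le> i \<and> i < hi"
  unfolding children_in_def by (metis nth_mem)

lemma nth_drop_shift: "n + k \<le> i \<Longrightarrow> k \<le> length w \<Longrightarrow> drop k w ! (i - (n + k)) = w ! (i - n)"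
  by (simp add: nth_drop)

lemma all_less_add: "(\<forall>k<(a::nat) + b. P k) \<longleftrightarrow> (\<forall>k<a. P k) \<and> (\<forall>k<b. P (a + k))"
  by (auto, metis add_diff_inverse_nat add_less_cancel_left)

lemma nodes_compat_append:
  assumes b1: "children_in n (n + length L1) L1" and b2: "children_in (n + length L1) hi L2"
  shows "nodes_compat A n (L1 @ L2) w \<longleftrightarrow> length w = length L1 + length L2 \<and>
     nodes_compat A n L1 (take (length L1) w) \<and> nodes_compat A (n + length L1) L2 (drop (length L1) w)"
proof (cases "length w = length L1 + length L2")
  case True
  let ?l = "length L1"
  have left: "node_compat A n (L1 @ L2) w k \<longleftrightarrow> node_compat A n L1 (take ?l w) k" if k: "k < ?l" for k
  proof -
    have "i' - n < ?l" if "j < length (snd (L1!k))" "snd (L1!k)!j = Some i'" for j i'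
      using children_in_nth[OF b1 k that] by arith
    then show ?thesis unfolding node_compat_def using k True by (auto simp: nth_append)
  qed
  have right: "node_compat A n (L1 @ L2) w (?l + k) \<longleftrightarrow> node_compat A (n + ?l) L2 (drop ?l w) k"
    if k: "k < length L2" for k
  proof -
    have "n + ?l \<le> i'" if "j < length (snd (L2!k))" "snd (L2!k)!j = Some i'" for j i'
      using children_in_nth[OF b2 k that] by simp
    then show ?thesis unfolding node_compat_def using k True by (auto simp: nth_append nth_drop_shift)
  qed
  have "set w \<subseteq> carrier A \<longleftrightarrow> set (take ?l w) \<subseteq> carrier A \<and> set (drop ?l w) \<subseteq> carrier A"
    by (metis append_take_drop_id set_append Un_subset_iff)
  with True left right show ?thesis
    unfolding nodes_compat_def length_append all_less_add by auto
qed (auto simp: nodes_compat_def)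

lemma nodes_compat_Cons:
  assumes b: "children_in (Suc n) hi L"
  shows "nodes_compat A n (e # L) (a # w) \<longleftrightarrow> a \<in> carrier A \<and> a \<in> Dc A (fst e) \<and>
     (\<forall>j<length (snd e). \<forall>i'. snd e ! j = Some i' \<longrightarrow> Ar A (Suc j) a ((a # w) ! (i' - n)))
     \<and> nodes_compat A (Suc n) L w"
proof -
  have tail: "node_compat A n (e # L) (a # w) (Suc k) \<longleftrightarrow> node_compat A (Suc n) L w k"
    if k: "k < length L" for k
  proof -
    have "i' - n = Suc (i' - Suc n)" if "j < length (snd (L!k))" "snd (L!k)!j = Some i'" for j i'
      using children_in_nth[OF b k that] by arith
    then show ?thesis unfolding node_compat_def using k by auto
  qed
  have "nodes_compat A n (e # L) (a # w) \<longleftrightarrow> length w = length L \<and> set (a # w) \<subseteq> carrier A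
      \<and> node_compat A n (e # L) (a # w) 0 \<and> (\<forall>k<length L. node_compat A n (e # L) (a # w) (Suc k))"
    unfolding nodes_compat_def length_Cons All_less_Suc2 by simp
  also have "\<dots> \<longleftrightarrow> a \<in> carrier A \<and> a \<in> Dc A (fst e) \<and>
     (\<forall>j<length (snd e). \<forall>i'. snd e ! j = Some i' \<longrightarrow> Ar A (Suc j) a ((a # w) ! (i' - n)))
     \<and> nodes_compat A (Suc n) L w"
    using tail unfolding nodes_compat_def node_compat_def by auto
  finally show ?thesis .
qed

definition edges_compat :: "('s, 'a) fla \<Rightarrow> 'a \<Rightarrow> nat \<Rightarrow> nat option list \<Rightarrow> nat \<Rightarrow> 'a list \<Rightarrow> bool" where
  "edges_compat A a j cs n w \<longleftrightarrow> (\<forall>k<length cs. \<forall>i. cs!k = Some i \<longrightarrow> Ar A (j + k) a (w!(i - n)))"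

lemma edges_compat_simps [simp]:
  "edges_compat A a j [] n w"
  "edges_compat A a j (c # cs) n w \<longleftrightarrow>
     (\<forall>i. c = Some i \<longrightarrow> Ar A j a (w!(i - n))) \<and> edges_compat A a (Suc j) cs n w"
  by (auto simp: edges_compat_def All_less_Suc2)

lemma edges_compat_drop:
  assumes "\<And>i. Some i \<in> set cs \<Longrightarrow> n + d \<le> i" and "d \<le> length w"
  shows "edges_compat A a j cs (n + d) (drop d w) \<longleftrightarrow> edges_compat A a j cs n w"
proof -
  have "n + d \<le> i" if "k < length cs" "cs!k = Some i" for k i
    using assms(1) that by (metis nth_mem)
  with assms(2) show ?thesis by (auto simp: edges_compat_def)
qed

lemma tree_compat_Node_iff_nodes_compat:
  assumes IH: "\<And>a j w. trees_compat A a j ts w \<longleftrightarrow> nodes_compat A (Suc n) (snd (prel (Suc n) ts)) w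
    \<and> edges_compat A a j (fst (prel (Suc n) ts)) (Suc n) w"
  shows "tree_compat A P (Node s ts) w \<longleftrightarrow> nodes_compat A n (pre n (Node s ts)) w \<and> P (w!0)"
proof -
  obtain cs rest where p: "prel (Suc n) ts = (cs, rest)" by (cases "prel (Suc n) ts")
  have b: "children_in (Suc n) (Suc n + sum_list (map deg ts)) rest"
    and cs_ge: "\<And>i. Some i \<in> set cs \<Longrightarrow> Suc n \<le> i"
    using pre_prel_bounds(2)[of "Suc n" ts] p by (auto intro: children_in_mono)
  show ?thesis
  proof (cases w)
    case Nil
    then show ?thesis using p by (simp add: nodes_compat_def)
  next
    case (Cons a w')
    have "edges_compat A a 1 cs n w \<longleftrightarrow> edges_compat A a 1 cs (n + 1) (drop 1 w)"
      using cs_ge Cons by (intro edges_compat_drop[symmetric]) auto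
    then have "edges_compat A a 1 cs (Suc n) w' \<longleftrightarrow>
        (\<forall>j<length cs. \<forall>i'. cs ! j = Some i' \<longrightarrow> Ar A (Suc j) a (w ! (i' - n)))"
      using Cons by (simp add: edges_compat_def)
    with IH[of a 1 w'] p Cons show ?thesis by (simp add: nodes_compat_Cons[OF b]) blast
  qed
qed

lemma trees_compat_Cons_iff_nodes_compat:
  assumes IH1: "\<And>P v. tree_compat A P t v \<longleftrightarrow> nodes_compat A m (pre m t) v \<and> (t \<noteq> Leaf \<longrightarrow> P (v!0))"
    and IH2: "\<And>a j v. trees_compat A a j ts v \<longleftrightarrow> nodes_compat A (m + deg t) (snd (prel (m + deg t) ts)) v
      \<and> edges_compat A a j (fst (prel (m + deg t) ts)) (m + deg t) v"
  shows "trees_compat A a j (t # ts) w \<longleftrightarrow> nodes_compat A m (snd (prel m (t # ts))) w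
    \<and> edges_compat A a j (fst (prel m (t # ts))) m w"
proof -
  obtain cs rest where p: "prel (m + deg t) ts = (cs, rest)" by (cases "prel (m + deg t) ts")
  have pr: "prel m (t # ts) = ((if t = Leaf then None else Some m) # cs, pre m t @ rest)"
    using p by simp
  have cs: "length rest = sum_list (map deg ts)"
    "children_in (Suc (m + deg t)) (m + deg t + sum_list (map deg ts)) rest"
    "\<And>i. Some i \<in> set cs \<Longrightarrow> m + deg t \<le> i"
    using pre_prel_bounds(2)[of "m + deg t" ts] p by auto
  have t: "length (pre m t) = deg t" "children_in (Suc m) (m + deg t) (pre m t)"
    using pre_prel_bounds(1)[of m t] by auto
  have b1: "children_in m (m + length (pre m t)) (pre m t)"
    and b2: "children_in (m + length (pre m t)) (m + deg t + sum_list (map deg ts)) rest"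
    using t cs(2) by (auto intro: children_in_mono)
  show ?thesis
  proof (cases "length w = deg t + sum_list (map deg ts)")
    case False
    have "\<not> trees_compat A a j (t # ts) w"
    proof
      assume "trees_compat A a j (t # ts) w"
      from tree_compat_length(2)[OF this] False show False by simp
    qed
    moreover have "\<not> nodes_compat A m (snd (prel m (t # ts))) w"
      using False t(1) cs(1) pr by (simp add: nodes_compat_def)
    ultimately show ?thesis by blast
  next
    case True
    have root: "(t \<noteq> Leaf \<longrightarrow> Ar A j a (take (deg t) w ! 0)) \<longleftrightarrow>
        (\<forall>i. (if t = Leaf then None else Some m) = Some i \<longrightarrow> Ar A j a (w ! (i - m)))"
      using deg_pos[of t] by auto
    have "edges_compat A a (Suc j) cs (m + deg t) (drop (deg t) w) \<longleftrightarrow> edges_compat A a (Suc j) cs m w"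
      using cs(3) True by (intro edges_compat_drop) auto
    with root True cs(1) show ?thesis
      unfolding trees_compat.simps IH1 IH2 p pr fst_conv snd_conv nodes_compat_append[OF b1 b2] t(1)
      by simp blast
  qed
qed

lemma tree_compat_iff_nodes_compat:
  fixes t :: "'s tm" and ts :: "'s tm list" and A :: "('s, 'a) fla"
  shows "\<And>P w. tree_compat A P t w \<longleftrightarrow> nodes_compat A n (pre n t) w \<and> (t \<noteq> Leaf \<longrightarrow> P (w!0))"
    "\<And>a j w. trees_compat A a j ts w \<longleftrightarrow> nodes_compat A m (snd (prel m ts)) w
      \<and> edges_compat A a j (fst (prel m ts)) m w"
proof (induction n t and m ts rule: pre_prel.induct)
  case (2 n s ts)
  from tree_compat_Node_iff_nodes_compat[OF "2"] show ?case by simp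
next
  case (4 m t ts)
  obtain cs rest where "prel (m + deg t) ts = (cs, rest)" by (cases "prel (m + deg t) ts")
  from trees_compat_Cons_iff_nodes_compat[OF "4.IH"(2)[OF this[symmetric]] "4.IH"(1)] show ?case .
qed (auto simp: nodes_compat_def)

lemma forest_compat_iff_nodes_compat:
  "forest_compat A f w \<longleftrightarrow> nodes_compat A n (fnodes_from n f) w \<and> (\<forall>i\<in>froots_from n f. w!(i - n) \<in> Rt A)"
proof (induction f arbitrary: n w)
  case Nil
  then show ?case by (auto simp: nodes_compat_def)
next
  case (Cons t ts)
  have t: "length (pre n t) = deg t" "children_in (Suc n) (n + deg t) (pre n t)"
    using pre_prel_bounds(1)[of n t] by auto
  have ts: "length (fnodes_from (n + deg t) ts) = fdeg ts"
    "children_in (Suc (n + deg t)) (n + deg t + fdeg ts) (fnodes_from (n + deg t) ts)"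
    "\<forall>i\<in>froots_from (n + deg t) ts. n + deg t \<le> i \<and> i < n + deg t + fdeg ts"
    using fnodes_from_bounds[of "n + deg t" ts] by auto
  have b1: "children_in n (n + length (pre n t)) (pre n t)"
    and b2: "children_in (n + length (pre n t)) (n + deg t + fdeg ts) (fnodes_from (n + deg t) ts)"
    using t ts by (auto intro: children_in_mono)
  show ?case
  proof (cases "length w = deg t + fdeg ts")
    case False
    have "\<not> forest_compat A (t # ts) w"
    proof
      assume "forest_compat A (t # ts) w"
      from forest_compat_length[OF this] False show False by simp
    qed
    moreover have "\<not> nodes_compat A n (fnodes_from n (t # ts)) w"
      using False t ts by (auto simp: nodes_compat_def)
    ultimately show ?thesis by blast
  next
    case True
    have root: "(\<forall>i\<in>(if t = Leaf then {} else {n}). w ! (i - n) \<in> Rt A) \<longleftrightarrow>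
        (t \<noteq> Leaf \<longrightarrow> take (deg t) w ! 0 \<in> Rt A)"
      using deg_pos[of t] by auto
    have "drop (deg t) w ! (i - (n + deg t)) = w ! (i - n)" if "i \<in> froots_from (n + deg t) ts" for i
      using ts(3) that True by (intro nth_drop_shift) auto
    then have roots: "(\<forall>i\<in>froots_from (n + deg t) ts. w ! (i - n) \<in> Rt A) \<longleftrightarrow>
        (\<forall>i\<in>froots_from (n + deg t) ts. drop (deg t) w ! (i - (n + deg t)) \<in> Rt A)"
      by auto
    from True ts(1) root roots show ?thesis
      unfolding fnodes_from.simps froots_from.simps forest_compat.simps nodes_compat_append[OF b1 b2]
        t(1) ball_Un Cons.IH[where n = "n + deg t"] tree_compat_iff_nodes_compat(1)[where n = n]
      by simp blast
  qed
qed

lemma compatible_iff_forest_compat: "compatible A f w \<longleftrightarrow> forest_compat A f w"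
proof -
  let ?L = "fnodes f"
  have len: "length ?L = fdeg f"
    using fnodes_from_bounds[of 1 f] by (simp add: fnodes_def)
  have decs: "(\<forall>i. 1 \<le> i \<and> i \<le> fdeg f \<longrightarrow> w ! (i - 1) \<in> Dc A (dec f i)) \<longleftrightarrow>
      (\<forall>k<length ?L. w ! k \<in> Dc A (fst (?L ! k)))"
  proof (intro iffI allI impI)
    fix k assume "\<forall>i. 1 \<le> i \<and> i \<le> fdeg f \<longrightarrow> w ! (i - 1) \<in> Dc A (dec f i)" "k < length ?L"
    then show "w ! k \<in> Dc A (fst (?L ! k))" using len by (auto simp: dec_def dest: spec[of _ "Suc k"])
  next
    fix i assume "\<forall>k<length ?L. w ! k \<in> Dc A (fst (?L ! k))" "1 \<le> i \<and> i \<le> fdeg f"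
    then show "w ! (i - 1) \<in> Dc A (dec f i)" using len by (auto simp: dec_def)
  qed
  have edges: "(\<forall>i j i'. child f i j i' \<longrightarrow> Ar A j (w ! (i - 1)) (w ! (i' - 1))) \<longleftrightarrow>
     (\<forall>k<length ?L. \<forall>j<length (snd (?L!k)). \<forall>i'. snd (?L!k)!j = Some i' \<longrightarrow> Ar A (Suc j) (w!k) (w!(i'-1)))"
  proof
    assume H: "\<forall>i j i'. child f i j i' \<longrightarrow> Ar A j (w ! (i - 1)) (w ! (i' - 1))"
    show "\<forall>k<length ?L. \<forall>j<length (snd (?L!k)). \<forall>i'. snd (?L!k)!j = Some i' \<longrightarrow> Ar A (Suc j) (w!k) (w!(i'-1))"
    proof (intro allI impI)
      fix k j i' assume "k < length ?L" "j < length (snd (?L!k))" "snd (?L!k)!j = Some i'"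
      then have "child f (Suc k) (Suc j) i'" using len by (simp add: child_def)
      with H show "Ar A (Suc j) (w!k) (w!(i'-1))" by fastforce
    qed
  next
    assume H: "\<forall>k<length ?L. \<forall>j<length (snd (?L!k)). \<forall>i'. snd (?L!k)!j = Some i' \<longrightarrow> Ar A (Suc j) (w!k) (w!(i'-1))"
    show "\<forall>i j i'. child f i j i' \<longrightarrow> Ar A j (w ! (i - 1)) (w ! (i' - 1))"
    proof (intro allI impI)
      fix i j i' assume "child f i j i'"
      then have "i - 1 < length ?L" "j - 1 < length (snd (?L!(i-1)))" "snd (?L!(i-1))!(j-1) = Some i'" "Suc (j - 1) = j"
        using len by (auto simp: child_def)
      with H show "Ar A j (w ! (i - 1)) (w ! (i' - 1))" by metis
    qed
  qed
  have "forest_compat A f w \<longleftrightarrow> nodes_compat A 1 ?L w \<and> (\<forall>i\<in>froots f. w!(i-1) \<in> Rt A)"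
    using forest_compat_iff_nodes_compat[of A f w 1] by (simp add: fnodes_def froots_def)
  also have "\<dots> \<longleftrightarrow> compatible A f w"
    unfolding compatible_def nodes_compat_def node_compat_def decs edges len by auto
  finally show ?thesis by simp
qed

fun sum_unassoc :: "'a + ('b + 'c) \<Rightarrow> ('a + 'b) + 'c" where
  "sum_unassoc (Inl a) = Inl (Inl a)"
| "sum_unassoc (Inr (Inl b)) = Inl (Inr b)"
| "sum_unassoc (Inr (Inr c)) = Inr c"

lemma sum_assoc_eq_iff: "b = sum_assoc x \<longleftrightarrow> x = sum_unassoc b"
  by (cases x rule: sum_assoc.cases; cases b rule: sum_unassoc.cases) auto

lemma fla_sum_assoc:
  "fla_map sum_assoc (fla_sum (fla_sum A1 A2) A3) = fla_sum A1 (fla_sum A2 A3)"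
proof -
  have sets: "sum_assoc ` (Inl ` (Inl ` X \<union> Inr ` Y) \<union> Inr ` Z) = Inl ` X \<union> Inr ` (Inl ` Y \<union> Inr ` Z)"
    for X Y Z
    by (simp add: image_Un image_image Un_assoc)
  have arrows: "(\<lambda>j b b'. \<exists>x x'. b = sum_assoc x \<and> b' = sum_assoc x' \<and> Ar (fla_sum (fla_sum A1 A2) A3) j x x')
     = Ar (fla_sum A1 (fla_sum A2 A3))"
  proof (intro ext)
    fix j b b'
    show "(\<exists>x x'. b = sum_assoc x \<and> b' = sum_assoc x' \<and> Ar (fla_sum (fla_sum A1 A2) A3) j x x')
       \<longleftrightarrow> Ar (fla_sum A1 (fla_sum A2 A3)) j b b'"
      unfolding sum_assoc_eq_iff
      by (cases b rule: sum_unassoc.cases; cases b' rule: sum_unassoc.cases) (auto simp: fla_sum_def)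
  qed
  show ?thesis
    unfolding fla_map_def
    by (rule fla.equality) (simp_all only: fla.select_convs arrows, simp_all add: fla_sum_def sets)
qed

section \<open>\<open>r\<^sub>A\<close> is a graded unital algebra morphism\<close>

lemma r_basis_eq: "r_basis A f w = (if forest_compat A f w then 1 else 0)"
  by (simp add: r_basis_def compatible_iff_forest_compat)

lemma r_basis_append:
  "r_basis A (f1 @ f2) w = (\<Sum>i\<le>length w. r_basis A f1 (take i w) * r_basis A f2 (drop i w))"
proof -
  let ?k = "fdeg f1"
  have not_compat: "\<not> forest_compat A f1 (take i w)" if "length (take i w) \<noteq> ?k" for i
    using forest_compat_length that by blast
  have "(\<Sum>i\<le>length w. r_basis A f1 (take i w) * r_basis A f2 (drop i w))
      = (\<Sum>i\<le>length w. if i = ?k then r_basis A f1 (take ?k w) * r_basis A f2 (drop ?k w) else 0)"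
    by (rule sum.cong) (auto simp: r_basis_eq not_compat)
  also have "\<dots> = (if ?k \<le> length w then r_basis A f1 (take ?k w) * r_basis A f2 (drop ?k w) else 0)"
    by (simp add: sum.delta)
  also have "\<dots> = r_basis A (f1 @ f2) w"
    using not_compat[of ?k] by (simp add: r_basis_eq forest_compat_append)
  finally show ?thesis by (rule sym)
qed

definition pair_append :: "'x list \<times> 'x list \<Rightarrow> 'x list" where
  "pair_append p = fst p @ snd p"

lemma N_mult_eq_sum_pairs:
  assumes "finite {f. x f \<noteq> 0}" and "finite {f. y f \<noteq> 0}"
  shows "N_mult x y h = (\<Sum>p\<in>{p\<in>{f. x f \<noteq> 0} \<times> {f. y f \<noteq> 0}. pair_append p = h}. x (fst p) * y (snd p))"
proof -
  let ?split = "\<lambda>i. (take i h, drop i h)"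
  have inj: "inj_on ?split {..length h}"
    by (rule inj_onI) (metis atMost_iff fst_conv length_take min.absorb2)
  have img: "?split ` {..length h} = {p. pair_append p = h}"
  proof
    show "{p. pair_append p = h} \<subseteq> ?split ` {..length h}"
    proof
      fix p assume "p \<in> {p. pair_append p = h}"
      then have "p = ?split (length (fst p))" "length (fst p) \<in> {..length h}"
        by (auto simp: prod_eq_iff pair_append_def)
      then show "p \<in> ?split ` {..length h}" by blast
    qed
  qed (auto simp: pair_append_def)
  have "N_mult x y h = (\<Sum>i\<in>{..length h}. x (fst (?split i)) * y (snd (?split i)))"
    by (simp add: N_mult_def)
  also have "\<dots> = (\<Sum>p\<in>{p. pair_append p = h}. x (fst p) * y (snd p))"
    unfolding img[symmetric] by (rule sum.reindex[OF inj, symmetric, unfolded comp_def])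
  also have "\<dots> = (\<Sum>p\<in>{p\<in>{f. x f \<noteq> 0} \<times> {f. y f \<noteq> 0}. pair_append p = h}. x (fst p) * y (snd p))"
  proof (rule sum.mono_neutral_right)
    show "finite {p. pair_append p = h}" unfolding img[symmetric] by simp
  qed auto
  finally show ?thesis .
qed

lemma r_map_N_mult:
  fixes x y :: "'s forest \<Rightarrow> 'k::field_char_0"
  assumes fx: "finite {f. x f \<noteq> 0}" and fy: "finite {f. y f \<noteq> 0}"
  shows "r_map A (N_mult x y) = poly_mult (r_map A x) (r_map A y)"
proof
  fix w
  let ?X = "{f. x f \<noteq> 0}" and ?Y = "{f. y f \<noteq> 0}"
  let ?P = "?X \<times> ?Y"
  have fP: "finite ?P" using fx fy by simp
  note N_mult = N_mult_eq_sum_pairs[OF fx fy]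
  have supp: "{h. N_mult x y h \<noteq> 0} \<subseteq> pair_append ` ?P"
  proof
    fix h assume "h \<in> {h. N_mult x y h \<noteq> 0}"
    then have "(\<Sum>p\<in>{p\<in>?P. pair_append p = h}. x (fst p) * y (snd p)) \<noteq> 0" using N_mult by simp
    then obtain p where "p \<in> {p\<in>?P. pair_append p = h}" by (meson sum.neutral)
    then show "h \<in> pair_append ` ?P" by blast
  qed
  have "r_map A (N_mult x y) w = (\<Sum>h\<in>{h. N_mult x y h \<noteq> 0}. N_mult x y h * r_basis A h w)"
    by (simp add: r_map_def)
  also have "\<dots> = (\<Sum>h\<in>pair_append ` ?P. N_mult x y h * r_basis A h w)"
    by (rule sum.mono_neutral_left) (use fP supp in auto)
  also have "\<dots> = (\<Sum>h\<in>pair_append ` ?P. \<Sum>p\<in>{p\<in>?P. pair_append p = h}. x (fst p) * y (snd p) * r_basis A (pair_append p) w)"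
    by (rule sum.cong) (auto simp: N_mult sum_distrib_right)
  also have "\<dots> = (\<Sum>p\<in>?P. x (fst p) * y (snd p) * r_basis A (pair_append p) w)"
    by (rule sum.group) (use fP in auto)
  also have "\<dots> = (\<Sum>a\<in>?X. \<Sum>b\<in>?Y. x a * y b * r_basis A (a @ b) w)"
    by (simp add: sum.cartesian_product pair_append_def split_def)
  also have "\<dots> = (\<Sum>a\<in>?X. \<Sum>b\<in>?Y. \<Sum>i\<le>length w.
      (x a * r_basis A a (take i w)) * (y b * r_basis A b (drop i w)))"
    by (simp add: r_basis_append sum_distrib_left mult_ac)
  also have "\<dots> = (\<Sum>i\<le>length w. \<Sum>a\<in>?X. \<Sum>b\<in>?Y.
      (x a * r_basis A a (take i w)) * (y b * r_basis A b (drop i w)))"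
    by (subst sum.swap) (rule sum.swap)
  also have "\<dots> = poly_mult (r_map A x) (r_map A y) w"
    by (simp add: poly_mult_def r_map_def sum_product)
  finally show "r_map A (N_mult x y) w = poly_mult (r_map A x) (r_map A y) w" .
qed

lemma r_map_nonzero_compatible: "r_map A x w \<noteq> 0 \<Longrightarrow> \<exists>f. x f \<noteq> 0 \<and> compatible A f w"
proof -
  assume "r_map A x w \<noteq> 0"
  then have "(\<Sum>f\<in>{f. x f \<noteq> 0}. x f * r_basis A f w) \<noteq> 0" by (simp add: r_map_def)
  then obtain f where "f \<in> {f. x f \<noteq> 0}" "x f * r_basis A f w \<noteq> 0" by (meson sum.neutral)
  then show ?thesis by (auto simp: r_basis_def split: if_splits)
qed

lemma kpoly_r_map:
  assumes "finite {f. x f \<noteq> 0}"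
  shows "kpoly A (r_map A x)"
  unfolding kpoly_def
proof (intro conjI allI impI exI)
  fix w assume "r_map A x w \<noteq> 0"
  then obtain f where "x f \<noteq> 0" "compatible A f w" using r_map_nonzero_compatible by blast
  then show "set w \<subseteq> carrier A" by (simp add: compatible_def)
next
  fix w assume "r_map A x w \<noteq> 0"
  then obtain f where f: "x f \<noteq> 0" "compatible A f w" using r_map_nonzero_compatible by blast
  then have "length w = fdeg f" by (simp add: compatible_def)
  also have "\<dots> \<le> (\<Sum>g\<in>{f. x f \<noteq> 0}. fdeg g)" by (rule member_le_sum) (use f assms in auto)
  finally show "length w \<le> (\<Sum>g\<in>{f. x f \<noteq> 0}. fdeg g)" .
qed

lemma r_map_N_unit: "r_map A (N_unit :: 's forest \<Rightarrow> 'k::field_char_0) = poly_one"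
proof
  fix w
  have "{f. (N_unit :: 's forest \<Rightarrow> 'k) f \<noteq> 0} = {[]}" by (auto simp: N_unit_def basisE_def)
  then show "r_map A (N_unit :: 's forest \<Rightarrow> 'k) w = poly_one w"
    by (simp add: r_map_def N_unit_def basisE_def r_basis_eq poly_one_def)
qed

lemma poly_homog_r_map: "N_homog n x \<Longrightarrow> poly_homog n (r_map A x)"
  unfolding poly_homog_def N_homog_def using r_map_nonzero_compatible by (metis compatible_def)

section \<open>Injectivity of \<open>r\<close> on the alphabet of positions\<close>

fun pos_word :: "nat list \<Rightarrow> 's tm \<Rightarrow> ('s \<times> nat list) list"
and pos_words :: "nat list \<Rightarrow> nat \<Rightarrow> 's tm list \<Rightarrow> ('s \<times> nat list) list" where
  "pos_word u Leaf = []"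
| "pos_word u (Node s ts) = (s, u) # pos_words u 1 ts"
| "pos_words u j [] = []"
| "pos_words u j (t # ts) = pos_word (u @ [j]) t @ pos_words u (Suc j) ts"

definition forest_pos_word :: "'s forest \<Rightarrow> ('s \<times> nat list) list" where
  "forest_pos_word f = concat (map (pos_word []) f)"

lemma forest_pos_word_simps [simp]:
  "forest_pos_word [] = []"
  "forest_pos_word (t # f) = pos_word [] t @ forest_pos_word f"
  by (simp_all add: forest_pos_word_def)

lemma pos_word_length [simp]:
  fixes t :: "'s tm" and ts :: "'s tm list"
  shows "length (pos_word u t) = deg t" "length (pos_words u j ts) = sum_list (map deg ts)"
  by (induction u t and u j ts rule: pos_word_pos_words.induct) auto

lemma pos_word_positions:
  fixes t :: "'s tm" and ts :: "'s tm list"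
  shows "x \<in> set (pos_word u t) \<Longrightarrow> \<exists>r. snd x = u @ r"
    "x \<in> set (pos_words u j ts) \<Longrightarrow> \<exists>j'\<ge>j. \<exists>r. snd x = u @ [j'] @ r"
proof (induction u t and u j ts rule: pos_word_pos_words.induct)
  case (4 u j t ts)
  then show ?case by (fastforce intro: Suc_leD)
qed auto

lemma A_pos_simps:
  "x \<in> carrier (A_pos S) \<longleftrightarrow> fst x \<in> S"
  "x \<in> Rt (A_pos S) \<longleftrightarrow> fst x \<in> S \<and> (\<exists>l. snd x = replicate l 0)"
  "x \<in> Dc (A_pos S) s \<longleftrightarrow> s \<in> S \<and> fst x = s"
  "Ar (A_pos S) j a x \<longleftrightarrow> fst a \<in> S \<and> fst x \<in> S \<and> (\<exists>l. snd x = snd a @ [j] @ replicate l 0)"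
  by (cases x; cases a; auto simp: A_pos_def)+

lemma tree_compat_Nil [simp]: "tree_compat A P t [] \<longleftrightarrow> t = Leaf"
  by (cases t) auto

lemma tree_compat_pos_word:
  fixes t :: "'s tm" and ts :: "'s tm list"
  shows "wf_tm S ar t \<Longrightarrow> (\<And>s ts'. t = Node s ts' \<Longrightarrow> P (s, u)) \<Longrightarrow> tree_compat (A_pos S) P t (pos_word u t)"
    "\<forall>t\<in>set ts. wf_tm S ar t \<Longrightarrow> s \<in> S \<Longrightarrow> trees_compat (A_pos S) (s, u) j ts (pos_words u j ts)"
proof (induction u t and u j ts arbitrary: P and s rule: pos_word_pos_words.induct)
  case (2 u s' ts)
  then show ?case by (auto simp: A_pos_simps)
next
  case (4 u j t ts)
  have "tree_compat (A_pos S) (Ar (A_pos S) j (s, u)) t (pos_word (u @ [j]) t)"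
    using 4 by (intro "4.IH"(1)) (auto simp: A_pos_simps intro: exI[of _ 0])
  with 4 show ?case by simp
qed auto

lemma forest_compat_forest_pos_word: "wf_forest S ar f \<Longrightarrow> forest_compat (A_pos S) f (forest_pos_word f)"
proof (induction f)
  case (Cons t f)
  then have "tree_compat (A_pos S) (\<lambda>a. a \<in> Rt (A_pos S)) t (pos_word [] t)"
    by (intro tree_compat_pos_word(1)) (auto simp: wf_forest_def A_pos_simps intro: exI[of _ 0])
  with Cons show ?case by (simp add: wf_forest_def)
qed simp

lemma tree_compat_positions:
  fixes A :: "('s, 'x \<times> nat list) fla"
  shows "tree_compat A P g w \<Longrightarrow> \<forall>j a x. Ar A j a x \<longrightarrow> (\<exists>r. snd x = snd a @ [j] @ r) \<Longrightarrow>
      \<forall>p. (\<forall>x. P x \<longrightarrow> (\<exists>r. snd x = p @ r)) \<longrightarrow> (\<forall>x\<in>set w. \<exists>r. snd x = p @ r)"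
    "trees_compat A a j gs w \<Longrightarrow> \<forall>j a x. Ar A j a x \<longrightarrow> (\<exists>r. snd x = snd a @ [j] @ r) \<Longrightarrow>
      \<forall>x\<in>set w. \<exists>j'\<ge>j. \<exists>r. snd x = snd a @ [j'] @ r"
proof (induction A P g w and A a j gs w rule: tree_compat_trees_compat.induct)
  case (2 A P s ts w)
  show ?case
  proof (cases w)
    case Nil then show ?thesis by simp
  next
    case (Cons b w')
    show ?thesis
    proof (intro allI impI ballI)
      fix p x assume hp: "\<forall>x. P x \<longrightarrow> (\<exists>r. snd x = p @ r)" and x: "x \<in> set w"
      have b: "P b" "trees_compat A b 1 ts w'" using 2(2) Cons by auto
      obtain r0 where r0: "snd b = p @ r0" using hp b(1) by blast
      show "\<exists>r. snd x = p @ r"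
      proof (cases "x = b")
        case True then show ?thesis using r0 by blast
      next
        case False
        then have "x \<in> set w'" using x Cons by simp
        then obtain j' r where "snd x = snd b @ [j'] @ r" using 2(1)[OF Cons b(2) 2(3)] by blast
        then show ?thesis using r0 by auto
      qed
    qed
  qed
next
  case (4 A a j t ts w)
  have t: "tree_compat A (Ar A j a) t (take (deg t) w)" and ts: "trees_compat A a (Suc j) ts (drop (deg t) w)"
    using 4(3) by auto
  note extends = 4(4)
  show ?case
  proof
    fix x assume "x \<in> set w"
    then have "x \<in> set (take (deg t) w) \<or> x \<in> set (drop (deg t) w)"
      by (metis Un_iff append_take_drop_id set_append)
    then show "\<exists>j'\<ge>j. \<exists>r. snd x = snd a @ [j'] @ r"
    proof
      assume "x \<in> set (take (deg t) w)"
      moreover have "\<forall>x. Ar A j a x \<longrightarrow> (\<exists>r. snd x = (snd a @ [j]) @ r)"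
      proof (intro allI impI)
        fix x assume "Ar A j a x"
        then obtain r where "snd x = snd a @ [j] @ r" using extends by blast
        then show "\<exists>r. snd x = (snd a @ [j]) @ r" by simp
      qed
      ultimately obtain r where "snd x = (snd a @ [j]) @ r" using 4(1)[OF t extends] by blast
      then show ?thesis by auto
    next
      assume "x \<in> set (drop (deg t) w)"
      then obtain j' r where "j' \<ge> Suc j" "snd x = snd a @ [j'] @ r" using 4(2)[OF ts extends] by blast
      then show ?thesis by (intro exI[of _ j']) auto
    qed
  qed
qed auto

lemma A_pos_extends: "\<forall>j a x. Ar (A_pos S) j a x \<longrightarrow> (\<exists>r. snd x = snd a @ [j] @ r)"
  by (auto simp: A_pos_simps)

text \<open>Used to match the blocks of the canonical word with those of a compatible word:
  a block is pinned down by a property holding on it and failing right after it.\<close>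

lemma block_length_unique:
  assumes "\<forall>x\<in>set (take k xs). P x" "k < length xs \<Longrightarrow> \<not> P (xs ! k)"
    and "\<forall>x\<in>set (take k' xs). P x" "k' < length xs \<Longrightarrow> \<not> P (xs ! k')"
    and "k \<le> length xs" "k' \<le> length xs"
  shows "k = k'"
proof -
  have "takeWhile P xs = take n xs"
    if "\<forall>x\<in>set (take n xs). P x" "n < length xs \<Longrightarrow> \<not> P (xs ! n)" for n
  proof (rule takeWhile_eq_take_P_nth)
    fix i assume "i < n" "i < length xs"
    then have "take n xs ! i \<in> set (take n xs)" by (intro nth_mem) simp
    with that(1) \<open>i < n\<close> show "P (xs ! i)" by simp
  qed (use that in simp)
  then have "take k xs = take k' xs" using assms(1-4) by metis
  then show ?thesis using assms(5,6) by (metis length_take min.absorb2)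
qed

lemma pos_words_determine_trees:
  assumes IH: "\<And>t g P u. t \<in> set ts \<Longrightarrow> tree_compat (A_pos S) P g (pos_word u t) \<Longrightarrow> wf_tm S ar g \<Longrightarrow> g = t"
    and "length gs = length ts" "\<forall>g\<in>set gs. wf_tm S ar g"
    and "trees_compat (A_pos S) a j gs (pos_words (snd a) j ts)"
  shows "gs = ts"
  using assms
proof (induction ts arbitrary: gs j)
  case (Cons t ts)
  let ?W = "pos_words (snd a) j (t # ts)" and ?P = "\<lambda>x. \<exists>r. snd x = snd a @ [j] @ r"
  obtain g gs' where gs: "gs = g # gs'" using Cons.prems(2) by (cases gs) auto
  have g: "tree_compat (A_pos S) (Ar (A_pos S) j a) g (take (deg g) ?W)"
    and gs': "trees_compat (A_pos S) a (Suc j) gs' (drop (deg g) ?W)"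
    using Cons.prems(4) unfolding gs trees_compat.simps(2) by blast+
  have not_P: "\<not> ?P x" if "x \<in> set (pos_words (snd a) (Suc j) ts) \<or> x \<in> set (drop (deg g) ?W)" for x
  proof -
    from that obtain j' r where "j' \<ge> Suc j" "snd x = snd a @ [j'] @ r"
      using pos_word_positions(2) tree_compat_positions(2)[OF gs' A_pos_extends] by blast
    then show ?thesis by simp
  qed
  have "deg g = deg t"
  proof (rule block_length_unique[of "deg g" ?W ?P])
    have "\<forall>x. Ar (A_pos S) j a x \<longrightarrow> (\<exists>r. snd x = (snd a @ [j]) @ r)" by (auto simp: A_pos_simps)
    then show "\<forall>x\<in>set (take (deg g) ?W). ?P x"
      using tree_compat_positions(1)[OF g A_pos_extends, THEN spec[of _ "snd a @ [j]"]] by simp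
    show "\<forall>x\<in>set (take (deg t) ?W). ?P x"
      using pos_word_positions(1)[of _ "snd a @ [j]" t] by auto
    show "deg g \<le> length ?W" using tree_compat_length(1)[OF g] by simp
    show "\<not> ?P (?W ! deg g)" if "deg g < length ?W"
    proof -
      from that have "?W ! deg g \<in> set (drop (deg g) ?W)" by (metis Cons_nth_drop_Suc list.set_intros(1))
      with not_P show ?thesis by blast
    qed
    show "\<not> ?P (?W ! deg t)" if "deg t < length ?W"
      using that not_P by (simp add: nth_append)
  qed simp
  then have take: "take (deg g) ?W = pos_word (snd a @ [j]) t"
    and drop: "drop (deg g) ?W = pos_words (snd a) (Suc j) ts"
    by simp_all
  have "g = t" using Cons.prems(1)[of t _ g] Cons.prems(3) g take gs by simp
  moreover have "gs' = ts"
  proof (rule Cons.IH)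
    show "\<And>t' g' P u. t' \<in> set ts \<Longrightarrow> tree_compat (A_pos S) P g' (pos_word u t') \<Longrightarrow> wf_tm S ar g' \<Longrightarrow> g' = t'"
      using Cons.prems(1) by simp
    show "trees_compat (A_pos S) a (Suc j) gs' (pos_words (snd a) (Suc j) ts)" using gs' drop by simp
  qed (use Cons.prems(2,3) gs in auto)
  ultimately show ?case using gs by simp
qed simp

lemma pos_word_determines_tree:
  "wf_tm S ar t \<Longrightarrow> tree_compat (A_pos S) P g (pos_word u t) \<Longrightarrow> wf_tm S ar g \<Longrightarrow> g = t"
proof (induction t arbitrary: g P u)
  case Leaf
  then show ?case by (cases g) auto
next
  case (Node s ts)
  then obtain s' gs where g: "g = Node s' gs" by (cases g) auto
  with Node.prems(2) have "s' = s" "trees_compat (A_pos S) (s, u) 1 gs (pos_words u 1 ts)"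
    by (auto simp: A_pos_simps)
  moreover have "length gs = length ts" using Node.prems g \<open>s' = s\<close> by simp
  ultimately have "gs = ts"
    using pos_words_determine_trees[of ts S ar gs "(s, u)" 1] Node g by auto
  with g \<open>s' = s\<close> show ?case by simp
qed

lemma forest_pos_word_determines_forest:
  "wf_forest S ar f \<Longrightarrow> reduced f \<Longrightarrow> wf_forest S ar g \<Longrightarrow> reduced g
    \<Longrightarrow> forest_compat (A_pos S) g (forest_pos_word f) \<Longrightarrow> g = f"
proof (induction f arbitrary: g)
  case Nil
  then show ?case by (cases g) (auto simp: reduced_def)
next
  case (Cons t f)
  let ?W = "forest_pos_word (t # f)" and ?Q = "\<lambda>x. \<exists>y\<in>set (snd x). y \<noteq> 0"
  obtain s ts where t: "t = Node s ts" using Cons.prems(2) by (cases t) (auto simp: reduced_def)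
  obtain g1 gs where gs: "g = g1 # gs" using Cons.prems(5) t by (cases g) auto
  obtain s' gs1 where g1: "g1 = Node s' gs1" using Cons.prems(4) gs by (cases g1) (auto simp: reduced_def)
  have g1_compat: "tree_compat (A_pos S) (\<lambda>a. a \<in> Rt (A_pos S)) g1 (take (deg g1) ?W)"
    and gs_compat: "forest_compat (A_pos S) gs (drop (deg g1) ?W)"
    using Cons.prems(5) gs by auto
  obtain b B where bB: "take (deg g1) ?W = b # B" "trees_compat (A_pos S) b 1 gs1 B"
    using g1_compat g1 by (cases "take (deg g1) ?W") auto
  have root_not_Q: "\<not> ?Q x" if "x \<in> Rt (A_pos S)" for x
    using that by (auto simp: A_pos_simps)
  have next_root: "\<not> ?Q (v ! 0)" if hv: "forest_compat (A_pos S) h v" "reduced h" "v \<noteq> []" for h v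
  proof -
    obtain h1 hs where "h = h1 # hs" using hv by (cases h) auto
    moreover obtain s'' hs1 where "h1 = Node s'' hs1" using hv \<open>h = h1 # hs\<close> by (cases h1) (auto simp: reduced_def)
    ultimately show ?thesis using hv root_not_Q by (cases v) auto
  qed
  have "deg g1 - 1 = deg t - 1"
  proof (rule block_length_unique[of _ "tl ?W" ?Q])
    have "take (deg g1 - 1) (tl ?W) = B" using bB(1) g1 by (simp add: take_tl)
    with tree_compat_positions(2)[OF bB(2) A_pos_extends]
    show "\<forall>x\<in>set (take (deg g1 - 1) (tl ?W)). ?Q x" by force
    have "take (deg t - 1) (tl ?W) = pos_words [] 1 ts" using t by simp
    with pos_word_positions(2)[of _ "[]" 1 ts]
    show "\<forall>x\<in>set (take (deg t - 1) (tl ?W)). ?Q x" by force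
    show "\<not> ?Q (tl ?W ! (deg g1 - 1))" if "deg g1 - 1 < length (tl ?W)"
    proof -
      have "deg g1 < length ?W" using that by (simp only: length_tl)
      then have "drop (deg g1) ?W \<noteq> []" by (simp only: drop_eq_Nil not_le)
      with next_root[OF gs_compat] Cons.prems(4) gs have "\<not> ?Q (drop (deg g1) ?W ! 0)"
        by (simp add: reduced_def)
      with that \<open>deg g1 < length ?W\<close> g1 show ?thesis by (simp add: nth_tl del: forest_pos_word_simps)
    qed
    show "\<not> ?Q (tl ?W ! (deg t - 1))" if idx: "deg t - 1 < length (tl ?W)"
    proof -
      obtain t2 f' where f: "f = t2 # f'" using idx t by (cases f) auto
      obtain s2 ts2 where "t2 = Node s2 ts2" using Cons.prems(2) f by (cases t2) (auto simp: reduced_def)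
      with idx t f show ?thesis by (simp add: nth_tl nth_append)
    qed
  qed (use tree_compat_length(1)[OF g1_compat] in \<open>simp_all add: min_def split: if_splits\<close>)
  then have "deg g1 = deg t" using g1 t by simp
  then have take: "take (deg g1) ?W = pos_word [] t" and drop: "drop (deg g1) ?W = forest_pos_word f"
    by simp_all
  have "g1 = t"
    using pos_word_determines_tree[of S ar t _ g1 "[]"] g1_compat Cons.prems(1,3) gs take
    by (simp add: wf_forest_def)
  moreover have "gs = f"
    using Cons.IH[of gs] Cons.prems gs_compat drop gs by (simp add: wf_forest_def reduced_def)
  ultimately show ?case using gs by simp
qed

lemma r_map_A_pos_forest_pos_word:
  assumes N: "N_elem S ar x" and f: "wf_forest S ar f" "reduced f"
  shows "r_map (A_pos S) x (forest_pos_word f) = x f"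
proof -
  have basis: "r_basis (A_pos S) g (forest_pos_word f) = (if g = f then 1 else 0)" if "x g \<noteq> 0" for g
    using that N forest_pos_word_determines_forest[OF f] forest_compat_forest_pos_word[OF f(1)]
    by (auto simp: N_elem_def r_basis_eq)
  have "r_map (A_pos S) x (forest_pos_word f) = (\<Sum>g | x g \<noteq> 0. if g = f then x g else 0)"
    unfolding r_map_def by (intro sum.cong refl) (simp add: basis)
  also have "\<dots> = x f" using N by (simp add: sum.delta N_elem_def)
  finally show ?thesis .
qed

lemma r_map_A_pos_inj:
  assumes "N_elem S ar x" and "N_elem S ar y" and "r_map (A_pos S) x = r_map (A_pos S) y"
  shows "x = y"
proof
  fix f
  show "x f = y f"
  proof (cases "wf_forest S ar f \<and> reduced f")
    case True
    then show ?thesis using r_map_A_pos_forest_pos_word assms by metis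
  next
    case False
    then have "x f = 0" "y f = 0" using assms(1,2) by (auto simp: N_elem_def)
    then show ?thesis by simp
  qed
qed

section \<open>Compatibility with the coproduct\<close>

lemma fla_sum_simps:
  "Inl a \<in> carrier (fla_sum A1 A2) \<longleftrightarrow> a \<in> carrier A1"
  "Inr b \<in> carrier (fla_sum A1 A2) \<longleftrightarrow> b \<in> carrier A2"
  "Inl a \<in> Rt (fla_sum A1 A2) \<longleftrightarrow> a \<in> Rt A1"
  "Inr b \<in> Rt (fla_sum A1 A2) \<longleftrightarrow> b \<in> Rt A2"
  "Inl a \<in> Dc (fla_sum A1 A2) s \<longleftrightarrow> a \<in> Dc A1 s"
  "Inr b \<in> Dc (fla_sum A1 A2) s \<longleftrightarrow> b \<in> Dc A2 s"
  "Ar (fla_sum A1 A2) j (Inl a) (Inl a') \<longleftrightarrow> Ar A1 j a a'"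
  "Ar (fla_sum A1 A2) j (Inl a) (Inr b) \<longleftrightarrow> a \<in> carrier A1 \<and> b \<in> Rt A2"
  "\<not> Ar (fla_sum A1 A2) j (Inr b) (Inl a)"
  "Ar (fla_sum A1 A2) j (Inr b) (Inr b') \<longleftrightarrow> Ar A2 j b b'"
  by (auto simp: fla_sum_def)

lemma restr_simps [simp]:
  "restr_l [] = []" "restr_r [] = []"
  "restr_l (Inl a # w) = a # restr_l w" "restr_l (Inr b # w) = restr_l w"
  "restr_r (Inl a # w) = restr_r w" "restr_r (Inr b # w) = b # restr_r w"
  "restr_l (w1 @ w2) = restr_l w1 @ restr_l w2" "restr_r (w1 @ w2) = restr_r w1 @ restr_r w2"
  by (auto simp: restr_l_def restr_r_def)

lemma restr_map_Inr [simp]: "restr_l (map Inr v) = []" "restr_r (map Inr v) = v"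
  by (induction v) auto

lemma length_restr_l: "length (restr_l w) = length (filter id (map isl w))"
proof (induction w)
  case (Cons x w)
  then show ?case by (cases x) auto
qed simp

lemma length_restr_r: "length (restr_r w) = length (filter Not (map isl w))"
proof (induction w)
  case (Cons x w)
  then show ?case by (cases x) auto
qed simp

lemma length_eq_length_restr: "length w = length (restr_l w) + length (restr_r w)"
proof (induction w)
  case (Cons x w)
  then show ?case by (cases x) auto
qed simp

lemmas length_restr = length_restr_l length_restr_r

lemma map_isl_eq_replicate_False:
  "map isl w = replicate n False \<longleftrightarrow> length w = n \<and> w = map Inr (restr_r w)"
proof (induction w arbitrary: n)
  case (Cons x w)
  then show ?case by (cases n; cases x) auto
qed auto

lemma tree_compat_fla_sum_Inr:
  "A = fla_sum A1 A2 \<Longrightarrow> (\<And>a. \<not> P (Inl a)) \<Longrightarrow>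
     tree_compat A P t w \<longleftrightarrow> (\<exists>v. w = map Inr v \<and> tree_compat A2 (\<lambda>b. P (Inr b)) t v)"
  "A = fla_sum A1 A2 \<Longrightarrow> a = Inr b \<Longrightarrow>
     trees_compat A a j ts w \<longleftrightarrow> (\<exists>v. w = map Inr v \<and> trees_compat A2 b j ts v)"
proof (induction A P t w and A a j ts w arbitrary: and b rule: tree_compat_trees_compat.induct)
  case (2 A P s ts w)
  show ?case
  proof (cases w)
    case (Cons c w')
    with 2 show ?thesis by (cases c) (auto simp: fla_sum_simps Cons_eq_map_conv)
  qed simp
next
  case (4 A a j t ts w)
  have Ar: "Ar A j a (Inr b') \<longleftrightarrow> Ar A2 j b b'" "\<not> Ar A j a (Inl a')" for a' b'
    using "4.prems" by (simp_all add: fla_sum_simps)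
  have IH1: "tree_compat A (Ar A j a) t (take (deg t) w) \<longleftrightarrow>
      (\<exists>v'. take (deg t) w = map Inr v' \<and> tree_compat A2 (Ar A2 j b) t v')"
    using "4.IH"(1)[OF "4.prems"(1)] Ar by simp
  note IH2 = "4.IH"(2)[OF "4.prems"]
  show ?case
  proof
    assume "trees_compat A a j (t # ts) w"
    then obtain v1 v2 where v1: "take (deg t) w = map Inr v1" "tree_compat A2 (Ar A2 j b) t v1"
      and v2: "drop (deg t) w = map Inr v2" "trees_compat A2 b (Suc j) ts v2"
      using IH1 IH2 by auto
    have "w = map Inr (v1 @ v2)" using v1(1) v2(1) by (metis append_take_drop_id map_append)
    moreover have "trees_compat A2 b j (t # ts) (v1 @ v2)"
      using v1 v2 tree_compat_length(1)[OF v1(2)] by simp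
    ultimately show "\<exists>v. w = map Inr v \<and> trees_compat A2 b j (t # ts) v" by blast
  next
    assume "\<exists>v. w = map Inr v \<and> trees_compat A2 b j (t # ts) v"
    then obtain v where "w = map Inr v" "trees_compat A2 b j (t # ts) v" by blast
    then show "trees_compat A a j (t # ts) w" using IH1 IH2 by (auto simp: take_map drop_map)
  qed
qed auto

text \<open>\<open>graft_mask t us\<close> records, for the internal nodes of \<open>graft t us\<close> in preorder,
  whether they belong to \<open>t\<close> (\<open>True\<close>) or to one of the grafted terms (\<open>False\<close>).\<close>

fun graft_mask :: "'s tm \<Rightarrow> 's tm list \<Rightarrow> bool list"
and graft_masks :: "'s tm list \<Rightarrow> 's tm list \<Rightarrow> bool list" where
  "graft_mask Leaf us = replicate (case us of [] \<Rightarrow> 0 | u # _ \<Rightarrow> deg u) False"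
| "graft_mask (Node s ts) us = True # graft_masks ts us"
| "graft_masks [] us = []"
| "graft_masks (t # ts) us = graft_mask t (take (nlv t) us) @ graft_masks ts (drop (nlv t) us)"

definition decomp_mask :: "'s tm \<times> 's tm list \<Rightarrow> bool list" where
  "decomp_mask d = graft_mask (fst d) (snd d)"

fun split_leaves :: "'s tm list \<Rightarrow> 'x list \<Rightarrow> 'x list list" where
  "split_leaves [] us = []"
| "split_leaves (t # ts) us = take (nlv t) us # split_leaves ts (drop (nlv t) us)"

lemma graft_mask_length:
  fixes t :: "'s tm" and ts :: "'s tm list"
  shows "length (graft_mask t us) = deg (graft t us)" "length (graft_masks ts us) = sum_list (map deg (graftl ts us))"
  by (induction t us and ts us rule: graft_mask_graft_masks.induct) (auto split: list.splits)

lemma graft_mask_count_True: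
  fixes t :: "'s tm" and ts :: "'s tm list"
  shows "length (filter id (graft_mask t us)) = deg t" "length (filter id (graft_masks ts us)) = sum_list (map deg ts)"
  by (induction t us and ts us rule: graft_mask_graft_masks.induct) auto

lemma deg_graft:
  fixes t :: "'s tm" and ts :: "'s tm list"
  shows "length us = nlv t \<Longrightarrow> deg (graft t us) = deg t + sum_list (map deg us)"
    "length us = sum_list (map nlv ts) \<Longrightarrow> sum_list (map deg (graftl ts us)) = sum_list (map deg ts) + sum_list (map deg us)"
proof (induction t us and ts us rule: graft_graftl.induct)
  case (1 us)
  then obtain u where "us = [u]" by (cases us) auto
  then show ?case by simp
next
  case (4 t ts us)
  have l1: "length (take (nlv t) us) = nlv t" using 4(3) by simp
  have l2: "length (drop (nlv t) us) = sum_list (map nlv ts)" using 4(3) by simp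
  have "sum_list (map deg us) = sum_list (map deg (take (nlv t) us)) + sum_list (map deg (drop (nlv t) us))"
    by (metis append_take_drop_id map_append sum_list_append)
  then show ?case using 4(1)[OF l1] 4(2)[OF l2] by simp
qed auto

lemma split_leaves_length: "length (split_leaves ts us) = length ts"
  by (induction ts arbitrary: us) auto

lemma concat_split_leaves: "length us = sum_list (map nlv ts) \<Longrightarrow> concat (split_leaves ts us) = us"
  by (induction ts arbitrary: us) auto

lemma split_leaves_lengths: "length us = sum_list (map nlv ts) \<Longrightarrow> list_all2 (\<lambda>t u. length u = nlv t) ts (split_leaves ts us)"
  by (induction ts arbitrary: us) auto

lemma graftl_split_leaves: "graftl ts us = map (\<lambda>(t, u). graft t u) (zip ts (split_leaves ts us))"
  by (induction ts arbitrary: us) auto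

lemma graft_masks_split_leaves: "graft_masks ts us = concat (map (\<lambda>(t, u). graft_mask t u) (zip ts (split_leaves ts us)))"
  by (induction ts arbitrary: us) auto

lemma split_leaves_concat: "\<forall>d\<in>set ds. length (snd d) = nlv (fst d) \<Longrightarrow> split_leaves (map fst ds) (concat (map snd ds)) = map snd ds"
  by (induction ds) auto

lemma decomps_iff: "d \<in> decomps S ar t \<longleftrightarrow> wf_tm S ar (fst d) \<and> (\<forall>u\<in>set (snd d). wf_tm S ar u)
   \<and> length (snd d) = nlv (fst d) \<and> graft (fst d) (snd d) = t"
  by (cases d) (simp add: decomps_def)

lemma decomps_Leaf: "decomps S ar Leaf = {(Leaf, [Leaf])}"
proof
  show "decomps S ar Leaf \<subseteq> {(Leaf, [Leaf])}"
  proof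
    fix d assume "d \<in> decomps S ar Leaf"
    then obtain t' us where d: "d = (t', us)" "length us = nlv t'" "graft t' us = Leaf"
      by (auto simp: decomps_def)
    then have t': "t' = Leaf" by (cases t') auto
    then obtain u where "us = [u]" using d by (cases us) auto
    then show "d \<in> {(Leaf, [Leaf])}" using d t' by simp
  qed
  show "{(Leaf, [Leaf])} \<subseteq> decomps S ar Leaf" by (simp add: decomps_def)
qed

abbreviation decomp_of :: "'s set \<Rightarrow> ('s \<Rightarrow> nat) \<Rightarrow> 's tm \<times> 's tm list \<Rightarrow> 's tm \<Rightarrow> bool" where
  "decomp_of S ar d t \<equiv> d \<in> decomps S ar t"

lemma decomp_of_props:
  "list_all2 (decomp_of S ar) ds ts \<Longrightarrow> d \<in> set ds \<Longrightarrow>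
    wf_tm S ar (fst d) \<and> (\<forall>u\<in>set (snd d). wf_tm S ar u) \<and> length (snd d) = nlv (fst d)"
  by (induction rule: list_all2_induct) (auto simp: decomps_iff)

lemma Node_in_decomps:
  assumes wf: "wf_tm S ar (Node s ts)" and ds: "list_all2 (decomp_of S ar) ds ts"
  shows "(Node s (map fst ds), concat (map snd ds)) \<in> decomps S ar (Node s ts)"
proof -
  have L: "\<forall>d\<in>set ds. length (snd d) = nlv (fst d)" using decomp_of_props[OF ds] by blast
  have "map (\<lambda>d. graft (fst d) (snd d)) ds = ts"
    using ds by (induction ds ts rule: list_all2_induct) (auto simp: decomps_iff)
  moreover have "graftl (map fst ds) (concat (map snd ds)) = map (\<lambda>d. graft (fst d) (snd d)) ds"
    by (simp add: graftl_split_leaves split_leaves_concat[OF L] zip_map_fst_snd split_def)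
  moreover have "length (concat (map snd ds)) = sum_list (map nlv (map fst ds))"
    using L by (induction ds) auto
  ultimately show ?thesis
    using wf decomp_of_props[OF ds] list_all2_lengthD[OF ds] by (auto simp: decomps_iff)
qed

lemma decomps_Node_cases:
  assumes "(t', us) \<in> decomps S ar (Node s ts)"
  shows "(t', us) = (Leaf, [Node s ts]) \<or>
    (\<exists>ds. list_all2 (decomp_of S ar) ds ts \<and> (t', us) = (Node s (map fst ds), concat (map snd ds)))"
proof (cases t')
  case Leaf
  with assms show ?thesis by (cases us) (auto simp: decomps_def)
next
  case (Node s' ts')
  have d: "\<forall>u\<in>set us. wf_tm S ar u" "\<forall>t\<in>set ts'. wf_tm S ar t" "s' = s" "graftl ts' us = ts"
    and lus: "length us = sum_list (map nlv ts')"
    using assms Node by (auto simp: decomps_def)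
  define ds where "ds = zip ts' (split_leaves ts' us)"
  have fst_ds: "map fst ds = ts'" and snd_ds: "map snd ds = split_leaves ts' us"
    using split_leaves_length[of ts' us] by (auto simp: ds_def)
  have "list_all2 (decomp_of S ar) ds ts"
  proof (rule list_all2_all_nthI)
    show "length ds = length ts" unfolding ds_def d(4)[symmetric] graftl_split_leaves by simp
  next
    fix i assume i: "i < length ds"
    then have il: "i < length ts'" using fst_ds by (metis length_map)
    have di: "ds ! i = (ts' ! i, split_leaves ts' us ! i)"
      using i split_leaves_length[of ts' us] by (simp add: ds_def)
    have "set (split_leaves ts' us ! i) \<subseteq> set us"
      using il split_leaves_length[of ts' us] concat_split_leaves[OF lus] by (metis nth_mem set_concat UN_upper set_map)
    moreover have "length (split_leaves ts' us ! i) = nlv (ts' ! i)"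
      using split_leaves_lengths[OF lus] il by (simp add: list_all2_conv_all_nth)
    moreover have "ts ! i = graft (ts' ! i) (split_leaves ts' us ! i)"
      using i di unfolding d(4)[symmetric] graftl_split_leaves ds_def[symmetric] by simp
    ultimately show "decomp_of S ar (ds ! i) (ts ! i)" using di d(1,2) il by (auto simp: decomps_def)
  qed
  moreover have "(t', us) = (Node s (map fst ds), concat (map snd ds))"
    using Node d(3) fst_ds snd_ds concat_split_leaves[OF lus] by simp
  ultimately show ?thesis by blast
qed

lemma decomp_mask_Node:
  assumes ds: "list_all2 (decomp_of S ar) ds ts"
  shows "decomp_mask (Node s (map fst ds), concat (map snd ds)) = True # concat (map decomp_mask ds)"
proof -
  have L: "\<forall>d\<in>set ds. length (snd d) = nlv (fst d)" using decomp_of_props[OF ds] by blast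
  show ?thesis by (simp add: decomp_mask_def[abs_def] graft_masks_split_leaves split_leaves_concat[OF L] zip_map_fst_snd split_def)
qed

lemma decomp_mask_Leaf: "decomp_mask (Leaf, [t]) = replicate (deg t) False"
  by (simp add: decomp_mask_def)

lemma decomp_mask_counts:
  assumes "d \<in> decomps S ar t"
  shows "length (decomp_mask d) = deg t" "length (filter id (decomp_mask d)) = deg (fst d)"
    "length (filter Not (decomp_mask d)) = fdeg (snd d)"
proof -
  have d: "length (snd d) = nlv (fst d)" "graft (fst d) (snd d) = t" using assms by (auto simp: decomps_iff)
  show l: "length (decomp_mask d) = deg t" using graft_mask_length(1)[of "fst d" "snd d"] d by (simp add: decomp_mask_def)
  show t: "length (filter id (decomp_mask d)) = deg (fst d)" by (simp add: decomp_mask_def graft_mask_count_True)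
  have "length (filter id (decomp_mask d)) + length (filter (\<lambda>x. \<not> id x) (decomp_mask d)) = length (decomp_mask d)"
    by (rule sum_length_filter_compl)
  moreover have "deg t = deg (fst d) + fdeg (snd d)" using deg_graft(1)[OF d(1)] d(2) by (simp add: fdeg_def)
  ultimately show "length (filter Not (decomp_mask d)) = fdeg (snd d)" using l t by simp
qed

lemma bex_decomps_Node:
  assumes "wf_tm S ar (Node s ts)"
  shows "(\<exists>d\<in>decomps S ar (Node s ts). F d (decomp_mask d)) \<longleftrightarrow>
    F (Leaf, [Node s ts]) (replicate (deg (Node s ts)) False) \<or>
    (\<exists>ds. list_all2 (decomp_of S ar) ds ts
      \<and> F (Node s (map fst ds), concat (map snd ds)) (True # concat (map decomp_mask ds)))"
proof
  assume "\<exists>d\<in>decomps S ar (Node s ts). F d (decomp_mask d)"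
  then obtain t' us where d: "(t', us) \<in> decomps S ar (Node s ts)" "F (t', us) (decomp_mask (t', us))"
    by auto
  from decomps_Node_cases[OF d(1)] show "F (Leaf, [Node s ts]) (replicate (deg (Node s ts)) False) \<or>
    (\<exists>ds. list_all2 (decomp_of S ar) ds ts
      \<and> F (Node s (map fst ds), concat (map snd ds)) (True # concat (map decomp_mask ds)))"
  proof
    assume "(t', us) = (Leaf, [Node s ts])"
    with d(2) show ?thesis by (simp only: decomp_mask_Leaf) simp
  next
    assume "\<exists>ds. list_all2 (decomp_of S ar) ds ts \<and> (t', us) = (Node s (map fst ds), concat (map snd ds))"
    then obtain ds where "list_all2 (decomp_of S ar) ds ts" "(t', us) = (Node s (map fst ds), concat (map snd ds))"
      by blast
    with d(2) decomp_mask_Node show ?thesis by metis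
  qed
next
  have "(Leaf, [Node s ts]) \<in> decomps S ar (Node s ts)" using assms by (simp add: decomps_def)
  then show "F (Leaf, [Node s ts]) (replicate (deg (Node s ts)) False) \<or>
    (\<exists>ds. list_all2 (decomp_of S ar) ds ts
      \<and> F (Node s (map fst ds), concat (map snd ds)) (True # concat (map decomp_mask ds)))
    \<Longrightarrow> \<exists>d\<in>decomps S ar (Node s ts). F d (decomp_mask d)"
    using Node_in_decomps[OF assms] decomp_mask_Node decomp_mask_Leaf by metis
qed

lemma ex_list_all2_Cons:
  "(\<exists>ds. list_all2 R ds (t # ts) \<and> F ds) \<longleftrightarrow> (\<exists>d ds'. R d t \<and> list_all2 R ds' ts \<and> F (d # ds'))"
  by (auto simp: list_all2_Cons2)

lemma decomp_words_Cons:
  assumes H1: "\<forall>v. tree_compat A P t v \<longleftrightarrow> (\<exists>d\<in>decomps S ar t. map isl v = decomp_mask d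
      \<and> T1 (fst d) (restr_l v) \<and> forest_compat A2 (snd d) (restr_r v))"
    and H2: "\<forall>v. L2 v \<longleftrightarrow> (\<exists>ds. list_all2 (decomp_of S ar) ds ts \<and> map isl v = concat (map decomp_mask ds)
      \<and> L1 (map fst ds) (restr_l v) \<and> forest_compat A2 (concat (map snd ds)) (restr_r v))"
  shows "(tree_compat A P t (take (deg t) w) \<and> L2 (drop (deg t) w)) \<longleftrightarrow>
    (\<exists>d ds. d \<in> decomps S ar t \<and> list_all2 (decomp_of S ar) ds ts \<and> map isl w = decomp_mask d @ concat (map decomp_mask ds)
      \<and> T1 (fst d) (take (deg (fst d)) (restr_l w)) \<and> L1 (map fst ds) (drop (deg (fst d)) (restr_l w))
      \<and> forest_compat A2 (snd d) (take (fdeg (snd d)) (restr_r w))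
      \<and> forest_compat A2 (concat (map snd ds)) (drop (fdeg (snd d)) (restr_r w)))"
    (is "?lhs \<longleftrightarrow> ?rhs")
proof -
  have split: "restr_l w = restr_l (take (deg t) w) @ restr_l (drop (deg t) w)"
    "restr_r w = restr_r (take (deg t) w) @ restr_r (drop (deg t) w)"
    by (simp_all flip: restr_simps)
  have lengths: "length (restr_l (take (deg t) w)) = deg (fst d)"
    "length (restr_r (take (deg t) w)) = fdeg (snd d)"
    if "d \<in> decomps S ar t" "map isl (take (deg t) w) = decomp_mask d" for d
    using that decomp_mask_counts[OF that(1)] by (simp_all add: length_restr)
  show ?thesis
  proof
    assume ?lhs
    then obtain d ds where d: "d \<in> decomps S ar t" "map isl (take (deg t) w) = decomp_mask d"
        "T1 (fst d) (restr_l (take (deg t) w))" "forest_compat A2 (snd d) (restr_r (take (deg t) w))"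
      and ds: "list_all2 (decomp_of S ar) ds ts" "map isl (drop (deg t) w) = concat (map decomp_mask ds)"
        "L1 (map fst ds) (restr_l (drop (deg t) w))" "forest_compat A2 (concat (map snd ds)) (restr_r (drop (deg t) w))"
      using H1 H2 by blast
    have "map isl w = decomp_mask d @ concat (map decomp_mask ds)"
      using d(2) ds(2) by (metis append_take_drop_id map_append)
    with d ds lengths[OF d(1,2)] split show ?rhs by (intro exI[of _ d] exI[of _ ds]) simp
  next
    assume ?rhs
    then obtain d ds where d: "d \<in> decomps S ar t" and ds: "list_all2 (decomp_of S ar) ds ts"
      and mask: "map isl w = decomp_mask d @ concat (map decomp_mask ds)"
      and c: "T1 (fst d) (take (deg (fst d)) (restr_l w))" "L1 (map fst ds) (drop (deg (fst d)) (restr_l w))"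
        "forest_compat A2 (snd d) (take (fdeg (snd d)) (restr_r w))"
        "forest_compat A2 (concat (map snd ds)) (drop (fdeg (snd d)) (restr_r w))"
      by blast
    have "length (decomp_mask d) = deg t" using decomp_mask_counts[OF d] by simp
    then have m: "map isl (take (deg t) w) = decomp_mask d" "map isl (drop (deg t) w) = concat (map decomp_mask ds)"
      using mask by (simp_all flip: take_map drop_map)
    show ?lhs using H1 H2 d ds m c lengths[OF d m(1)] split by auto
  qed
qed

lemma trees_compat_fla_sum_Inl:
  fixes A1 :: "('s, 'a) fla" and A2 :: "('s, 'b) fla"
  assumes IH: "\<And>t P Q v. t \<in> set ts \<Longrightarrow> (\<And>a. P (Inl a) \<longleftrightarrow> Q a) \<Longrightarrow> (\<And>b. P (Inr b) \<longleftrightarrow> b \<in> Rt A2) \<Longrightarrow>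
      tree_compat (fla_sum A1 A2) P t v \<longleftrightarrow> (\<exists>d\<in>decomps S ar t. map isl v = decomp_mask d
        \<and> tree_compat A1 Q (fst d) (restr_l v) \<and> forest_compat A2 (snd d) (restr_r v))"
    and a: "a \<in> carrier A1"
  shows "trees_compat (fla_sum A1 A2) (Inl a) j ts w \<longleftrightarrow> (\<exists>ds. list_all2 (decomp_of S ar) ds ts
      \<and> map isl w = concat (map decomp_mask ds) \<and> trees_compat A1 a j (map fst ds) (restr_l w)
      \<and> forest_compat A2 (concat (map snd ds)) (restr_r w))"
  using IH
proof (induction ts arbitrary: j w)
  case (Cons t ts)
  have H1: "\<forall>v. tree_compat (fla_sum A1 A2) (Ar (fla_sum A1 A2) j (Inl a)) t v \<longleftrightarrow>
      (\<exists>d\<in>decomps S ar t. map isl v = decomp_mask d \<and> tree_compat A1 (Ar A1 j a) (fst d) (restr_l v)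
        \<and> forest_compat A2 (snd d) (restr_r v))"
    using a by (intro allI Cons.prems) (auto simp: fla_sum_simps)
  have H2: "\<forall>v. trees_compat (fla_sum A1 A2) (Inl a) (Suc j) ts v \<longleftrightarrow> (\<exists>ds. list_all2 (decomp_of S ar) ds ts
      \<and> map isl v = concat (map decomp_mask ds) \<and> trees_compat A1 a (Suc j) (map fst ds) (restr_l v)
      \<and> forest_compat A2 (concat (map snd ds)) (restr_r v))"
    using Cons.IH[OF Cons.prems[OF list.set_intros(2)]] by blast
  show ?case
    unfolding trees_compat.simps(2) decomp_words_Cons[OF H1 H2] ex_list_all2_Cons
    by (simp add: forest_compat_append conj_assoc)
qed auto

lemma tree_compat_fla_sum_Inr_root:
  assumes "\<And>b. P (Inr b) \<longleftrightarrow> b \<in> Rt A2"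
  shows "tree_compat (fla_sum A1 A2) P (Node s ts) (Inr b # w) \<longleftrightarrow>
    (\<exists>v. w = map Inr v \<and> tree_compat A2 (\<lambda>b. b \<in> Rt A2) (Node s ts) (b # v))"
  using assms tree_compat_fla_sum_Inr(2)[of "fla_sum A1 A2" A1 A2 "Inr b" b 1 ts w]
  by (auto simp: fla_sum_simps)

lemma tree_compat_fla_sum:
  fixes A1 :: "('s, 'a) fla" and A2 :: "('s, 'b) fla" and t :: "'s tm"
  assumes "wf_tm S ar t" and "\<And>a. P (Inl a) \<longleftrightarrow> Q a" and "\<And>b. P (Inr b) \<longleftrightarrow> b \<in> Rt A2"
  shows "tree_compat (fla_sum A1 A2) P t w \<longleftrightarrow> (\<exists>d\<in>decomps S ar t. map isl w = decomp_mask d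
    \<and> tree_compat A1 Q (fst d) (restr_l w) \<and> forest_compat A2 (snd d) (restr_r w))"
  using assms
proof (induction t arbitrary: P Q w)
  case Leaf
  then show ?case by (auto simp: decomps_Leaf decomp_mask_def)
next
  case (Node s ts)
  let ?A = "fla_sum A1 A2" and ?t = "Node s ts"
  let ?right = "map isl w = replicate (deg ?t) False \<and> restr_l w = [] \<and> forest_compat A2 [?t] (restr_r w)"
  let ?left = "\<lambda>ds. map isl w = True # concat (map decomp_mask ds)
    \<and> tree_compat A1 Q (Node s (map fst ds)) (restr_l w) \<and> forest_compat A2 (concat (map snd ds)) (restr_r w)"
  have IH: "tree_compat ?A P' t' v \<longleftrightarrow> (\<exists>d\<in>decomps S ar t'. map isl v = decomp_mask d
      \<and> tree_compat A1 Q' (fst d) (restr_l v) \<and> forest_compat A2 (snd d) (restr_r v))"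
    if "t' \<in> set ts" "\<And>a. P' (Inl a) \<longleftrightarrow> Q' a" "\<And>b. P' (Inr b) \<longleftrightarrow> b \<in> Rt A2" for t' P' Q' v
    using Node.IH[OF that(1) _ that(2,3)] Node.prems(1) that(1) by simp
  have children: "trees_compat ?A (Inl a) 1 ts v \<longleftrightarrow> (\<exists>ds. list_all2 (decomp_of S ar) ds ts
      \<and> map isl v = concat (map decomp_mask ds) \<and> trees_compat A1 a 1 (map fst ds) (restr_l v)
      \<and> forest_compat A2 (concat (map snd ds)) (restr_r v))" if "a \<in> carrier A1" for a v
    by (rule trees_compat_fla_sum_Inl[OF IH that])
  have "(\<exists>d\<in>decomps S ar ?t. map isl w = decomp_mask d \<and> tree_compat A1 Q (fst d) (restr_l w)
      \<and> forest_compat A2 (snd d) (restr_r w)) \<longleftrightarrow> ?right \<or> (\<exists>ds. list_all2 (decomp_of S ar) ds ts \<and> ?left ds)"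
    using bex_decomps_Node[OF Node.prems(1), where F = "\<lambda>d m. map isl w = m
      \<and> tree_compat A1 Q (fst d) (restr_l w) \<and> forest_compat A2 (snd d) (restr_r w)"]
    by (simp del: deg.simps forest_compat.simps)
  also have "\<dots> \<longleftrightarrow> tree_compat ?A P ?t w"
  proof (cases w)
    case (Cons x w')
    show ?thesis
    proof (cases x)
      case (Inl a)
      have "\<not> ?right" using Cons Inl by simp
      have "(\<exists>ds. list_all2 (decomp_of S ar) ds ts \<and> ?left ds) \<longleftrightarrow>
          a \<in> carrier A1 \<and> Q a \<and> a \<in> Dc A1 s \<and> (\<exists>ds. list_all2 (decomp_of S ar) ds ts
            \<and> map isl w' = concat (map decomp_mask ds) \<and> trees_compat A1 a 1 (map fst ds) (restr_l w')
            \<and> forest_compat A2 (concat (map snd ds)) (restr_r w'))"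
      proof -
        have "tree_compat A1 Q (Node s gs) (restr_l w) \<longleftrightarrow>
            a \<in> carrier A1 \<and> Q a \<and> a \<in> Dc A1 s \<and> trees_compat A1 a 1 gs (restr_l w')" for gs
          using Cons Inl by simp
        moreover have "map isl w = True # m \<longleftrightarrow> map isl w' = m" for m using Cons Inl by simp
        moreover have "restr_r w = restr_r w'" using Cons Inl by simp
        ultimately show ?thesis by (simp only:) auto
      qed
      also have "\<dots> \<longleftrightarrow> a \<in> carrier A1 \<and> Q a \<and> a \<in> Dc A1 s \<and> trees_compat ?A (Inl a) 1 ts w'"
        by (rule conj_cong[OF refl]) (use children[of a w'] in simp)
      also have "\<dots> \<longleftrightarrow> tree_compat ?A P ?t w"
        using Cons Inl Node.prems(2) by (simp add: fla_sum_simps)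
      finally show ?thesis using \<open>\<not> ?right\<close> by (simp only: simp_thms)
    next
      case (Inr b)
      have "\<not> ?left ds" for ds using Cons Inr by simp
      moreover have "?right \<longleftrightarrow> (\<exists>v. w' = map Inr v \<and> tree_compat A2 (\<lambda>b. b \<in> Rt A2) ?t (b # v))"
      proof
        assume r: ?right
        then have "w' = map Inr (restr_r w')" using Cons Inr by (simp add: map_isl_eq_replicate_False)
        moreover have "tree_compat A2 (\<lambda>b. b \<in> Rt A2) ?t (b # restr_r w')"
          using r Cons Inr by (simp only: forest_compat_single) simp
        ultimately show "\<exists>v. w' = map Inr v \<and> tree_compat A2 (\<lambda>b. b \<in> Rt A2) ?t (b # v)" by blast
      next
        assume "\<exists>v. w' = map Inr v \<and> tree_compat A2 (\<lambda>b. b \<in> Rt A2) ?t (b # v)"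
        then obtain v where v: "w' = map Inr v" "tree_compat A2 (\<lambda>b. b \<in> Rt A2) ?t (b # v)" by blast
        have "length (b # v) = deg ?t" using tree_compat_length(1)[OF v(2)] .
        with v Cons Inr show ?right
          by (simp only: forest_compat_single map_isl_eq_replicate_False) simp
      qed
      moreover have "tree_compat ?A P ?t w \<longleftrightarrow> (\<exists>v. w' = map Inr v \<and> tree_compat A2 (\<lambda>b. b \<in> Rt A2) ?t (b # v))"
        unfolding Cons Inr by (rule tree_compat_fla_sum_Inr_root[OF Node.prems(3)])
      ultimately show ?thesis by (simp only: simp_thms ex_simps)
    qed
  qed simp
  finally show ?case by simp
qed

lemma forest_compat_fla_sum:
  fixes A1 :: "('s, 'a) fla" and A2 :: "('s, 'b) fla"
  assumes "wf_forest S ar f"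
  shows "forest_compat (fla_sum A1 A2) f w \<longleftrightarrow> (\<exists>ds. list_all2 (decomp_of S ar) ds f
    \<and> map isl w = concat (map decomp_mask ds) \<and> forest_compat A1 (map fst ds) (restr_l w)
    \<and> forest_compat A2 (concat (map snd ds)) (restr_r w))"
  using assms
proof (induction f arbitrary: w)
  case (Cons t f)
  have H1: "\<forall>v. tree_compat (fla_sum A1 A2) (\<lambda>a. a \<in> Rt (fla_sum A1 A2)) t v \<longleftrightarrow>
      (\<exists>d\<in>decomps S ar t. map isl v = decomp_mask d \<and> tree_compat A1 (\<lambda>a. a \<in> Rt A1) (fst d) (restr_l v)
        \<and> forest_compat A2 (snd d) (restr_r v))"
    using Cons.prems by (intro allI tree_compat_fla_sum) (auto simp: wf_forest_def fla_sum_simps)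
  have H2: "\<forall>v. forest_compat (fla_sum A1 A2) f v \<longleftrightarrow> (\<exists>ds. list_all2 (decomp_of S ar) ds f
      \<and> map isl v = concat (map decomp_mask ds) \<and> forest_compat A1 (map fst ds) (restr_l v)
      \<and> forest_compat A2 (concat (map snd ds)) (restr_r v))"
    using Cons by (simp add: wf_forest_def)
  show ?case
    unfolding forest_compat.simps(2) decomp_words_Cons[OF H1 H2] ex_list_all2_Cons
    by (simp add: forest_compat_append conj_assoc)
qed auto

fun merge_words :: "bool list \<Rightarrow> 'a list \<Rightarrow> 'b list \<Rightarrow> ('a + 'b) list" where
  "merge_words [] u v = []"
| "merge_words (True # m) u v = Inl (hd u) # merge_words m (tl u) v"
| "merge_words (False # m) u v = Inr (hd v) # merge_words m u (tl v)"

lemma merge_words_restr: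
  "length (filter id m) = length u \<Longrightarrow> length (filter Not m) = length v \<Longrightarrow>
   map isl (merge_words m u v) = m \<and> restr_l (merge_words m u v) = u \<and> restr_r (merge_words m u v) = v"
proof (induction m arbitrary: u v)
  case (Cons b m)
  show ?case
  proof (cases b)
    case True
    with Cons.prems obtain a u' where "u = a # u'" by (cases u) auto
    with Cons True show ?thesis by auto
  next
    case False
    with Cons.prems obtain c v' where "v = c # v'" by (cases v) auto
    with Cons False show ?thesis by auto
  qed
qed auto

lemma merge_words_isl_restr: "merge_words (map isl w) (restr_l w) (restr_r w) = w"
proof (induction w)
  case (Cons x w)
  then show ?case by (cases x) auto
qed simp

lemma finite_interleavings: "finite {w :: ('a + 'b) list. restr_l w = u \<and> restr_r w = v}"
proof (rule finite_subset)
  show "{w :: ('a + 'b) list. restr_l w = u \<and> restr_r w = v}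
      \<subseteq> (\<lambda>m. merge_words m u v) ` {m. set m \<subseteq> UNIV \<and> length m = length u + length v}"
  proof
    fix w :: "('a + 'b) list" assume "w \<in> {w. restr_l w = u \<and> restr_r w = v}"
    then have "w = merge_words (map isl w) u v" "length (map isl w) = length u + length v"
      using merge_words_isl_restr[of w] length_eq_length_restr[of w] by auto
    then show "w \<in> (\<lambda>m. merge_words m u v) ` {m. set m \<subseteq> UNIV \<and> length m = length u + length v}"
      by blast
  qed
  show "finite ((\<lambda>m. merge_words m u v) ` {m :: bool list. set m \<subseteq> UNIV \<and> length m = length u + length v})"
    by (rule finite_imageI) (rule finite_lists_length_eq, simp)
qed

lemma concat_decomp_masks_inj:
  assumes "\<forall>t\<in>set ts. inj_on decomp_mask (decomps S ar t)"
    and "list_all2 (decomp_of S ar) ds1 ts" "list_all2 (decomp_of S ar) ds2 ts"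
    and "concat (map decomp_mask ds1) = concat (map decomp_mask ds2)"
  shows "ds1 = ds2"
  using assms
proof (induction ts arbitrary: ds1 ds2)
  case (Cons t ts)
  obtain d1 r1 where 1: "ds1 = d1 # r1" "d1 \<in> decomps S ar t" "list_all2 (decomp_of S ar) r1 ts"
    using Cons.prems(2) by (auto simp: list_all2_Cons2)
  obtain d2 r2 where 2: "ds2 = d2 # r2" "d2 \<in> decomps S ar t" "list_all2 (decomp_of S ar) r2 ts"
    using Cons.prems(3) by (auto simp: list_all2_Cons2)
  have "length (decomp_mask d1) = length (decomp_mask d2)"
    using decomp_mask_counts(1)[OF 1(2)] decomp_mask_counts(1)[OF 2(2)] by simp
  then have e: "decomp_mask d1 = decomp_mask d2" "concat (map decomp_mask r1) = concat (map decomp_mask r2)"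
    using Cons.prems(4) 1 2 by auto
  moreover have "d1 = d2"
    using inj_onD[of decomp_mask "decomps S ar t" d1 d2] Cons.prems(1) 1(2) 2(2) e(1)
    by simp
  moreover have "r1 = r2" using Cons.IH[OF _ 1(3) 2(3) e(2)] Cons.prems(1) by simp
  ultimately show ?case using 1(1) 2(1) by simp
qed simp

lemma inj_on_decomp_mask: "wf_tm S ar t \<Longrightarrow> inj_on decomp_mask (decomps S ar t)"
proof (induction t)
  case (Node s ts)
  have IH: "\<forall>t\<in>set ts. inj_on decomp_mask (decomps S ar t)" using Node by auto
  have Leaf_mask: "decomp_mask (Leaf, [Node s ts]) = False # replicate (sum_list (map deg ts)) False"
    by (simp add: decomp_mask_Leaf)
  have Node_mask: "\<exists>ds. list_all2 (decomp_of S ar) ds ts \<and> d = (Node s (map fst ds), concat (map snd ds))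
      \<and> decomp_mask d = True # concat (map decomp_mask ds)"
    if "d \<in> decomps S ar (Node s ts)" "d \<noteq> (Leaf, [Node s ts])" for d
    using that decomps_Node_cases[of "fst d" "snd d"] decomp_mask_Node[of S ar _ ts s] by fastforce
  have is_Leaf: "hd (decomp_mask d) \<longleftrightarrow> d \<noteq> (Leaf, [Node s ts])" if "d \<in> decomps S ar (Node s ts)" for d
    using Leaf_mask Node_mask[OF that] by (cases "d = (Leaf, [Node s ts])") auto
  show ?case
  proof (rule inj_onI)
    fix d1 d2 assume d: "d1 \<in> decomps S ar (Node s ts)" "d2 \<in> decomps S ar (Node s ts)"
      and eq: "decomp_mask d1 = decomp_mask d2"
    show "d1 = d2"
    proof (cases "d1 = (Leaf, [Node s ts])")
      case False
      with is_Leaf[OF d(1)] is_Leaf[OF d(2)] eq have "d2 \<noteq> (Leaf, [Node s ts])" by simp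
      with False obtain ds1 ds2 where ds1: "list_all2 (decomp_of S ar) ds1 ts"
          "d1 = (Node s (map fst ds1), concat (map snd ds1))" "decomp_mask d1 = True # concat (map decomp_mask ds1)"
        and ds2: "list_all2 (decomp_of S ar) ds2 ts"
          "d2 = (Node s (map fst ds2), concat (map snd ds2))" "decomp_mask d2 = True # concat (map decomp_mask ds2)"
        using Node_mask d by meson
      with eq have "ds1 = ds2" by (intro concat_decomp_masks_inj[OF IH ds1(1) ds2(1)]) simp
      with ds1(2) ds2(2) show ?thesis by simp
    next
      case True
      with is_Leaf[OF d(1)] have "\<not> hd (decomp_mask d1)" by blast
      with eq is_Leaf[OF d(2)] have "d2 = (Leaf, [Node s ts])" by simp
      with True show ?thesis by simp
    qed
  qed
qed (simp add: decomps_Leaf)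

lemma inj_on_concat_decomp_masks:
  assumes "wf_forest S ar f"
  shows "inj_on (\<lambda>ds. concat (map decomp_mask ds)) {ds. list_all2 (decomp_of S ar) ds f}"
proof -
  have "\<forall>t\<in>set f. inj_on decomp_mask (decomps S ar t)"
    using assms inj_on_decomp_mask by (auto simp: wf_forest_def)
  then show ?thesis by (intro inj_onI) (auto intro: concat_decomp_masks_inj)
qed

lemma decomp_masks_counts:
  "list_all2 (decomp_of S ar) ds f \<Longrightarrow> length (filter id (concat (map decomp_mask ds))) = fdeg (map fst ds)
    \<and> length (filter Not (concat (map decomp_mask ds))) = fdeg (concat (map snd ds))
    \<and> length (concat (map decomp_mask ds)) = fdeg f"
proof (induction ds f rule: list_all2_induct)
  case (Cons d t ds f)
  then show ?case using decomp_mask_counts[OF Cons(1)] by (simp add: id_def)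
qed simp

lemma finite_forest_decomps: "wf_forest S ar f \<Longrightarrow> finite {ds. list_all2 (decomp_of S ar) ds f}"
proof (rule finite_imageD[OF _ inj_on_concat_decomp_masks])
  have "(\<lambda>ds. concat (map decomp_mask ds)) ` {ds. list_all2 (decomp_of S ar) ds f}
      \<subseteq> {m. set m \<subseteq> UNIV \<and> length m = fdeg f}"
    using decomp_masks_counts by fastforce
  then show "finite ((\<lambda>ds. concat (map decomp_mask ds)) ` {ds. list_all2 (decomp_of S ar) ds f})"
    by (rule finite_subset) (rule finite_lists_length_eq, simp)
qed

text \<open>Merging along the masks is a bijection from the tuples of decompositions with
  compatible component words onto the compatible interleavings.\<close>

lemma card_compat_words_eq_card_decomps:
  fixes A1 :: "('s, 'a) fla" and A2 :: "('s, 'b) fla"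
  assumes wf: "wf_forest S ar f"
  shows "card {w. restr_l w = u \<and> restr_r w = v \<and> forest_compat (fla_sum A1 A2) f w}
    = card {ds. list_all2 (decomp_of S ar) ds f \<and> forest_compat A1 (map fst ds) u
        \<and> forest_compat A2 (concat (map snd ds)) v}"
proof -
  let ?W = "{w. restr_l w = u \<and> restr_r w = v \<and> forest_compat (fla_sum A1 A2) f w}"
  let ?D = "{ds. list_all2 (decomp_of S ar) ds f \<and> forest_compat A1 (map fst ds) u
    \<and> forest_compat A2 (concat (map snd ds)) v}"
  let ?merge = "\<lambda>ds. merge_words (concat (map decomp_mask ds)) u v"
  have merge: "map isl (?merge ds) = concat (map decomp_mask ds) \<and> restr_l (?merge ds) = u \<and> restr_r (?merge ds) = v"
    if "ds \<in> ?D" for ds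
  proof -
    from that have "list_all2 (decomp_of S ar) ds f" "forest_compat A1 (map fst ds) u"
      "forest_compat A2 (concat (map snd ds)) v" by auto
    then have "length (filter id (concat (map decomp_mask ds))) = length u"
      "length (filter Not (concat (map decomp_mask ds))) = length v"
      using decomp_masks_counts forest_compat_length by metis+
    then show ?thesis by (rule merge_words_restr)
  qed
  have "bij_betw ?merge ?D ?W"
  proof (rule bij_betw_imageI)
    show "inj_on ?merge ?D"
    proof (rule inj_onI)
      fix ds1 ds2 assume 1: "ds1 \<in> ?D" and 2: "ds2 \<in> ?D" and "?merge ds1 = ?merge ds2"
      then have "concat (map decomp_mask ds1) = concat (map decomp_mask ds2)"
        using merge[OF 1] merge[OF 2] by metis
      with 1 2 show "ds1 = ds2" using inj_on_concat_decomp_masks[OF wf] by (auto dest: inj_onD)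
    qed
    show "?merge ` ?D = ?W"
    proof
      show "?merge ` ?D \<subseteq> ?W"
      proof
        fix w assume "w \<in> ?merge ` ?D"
        then obtain ds where ds: "ds \<in> ?D" "w = ?merge ds" by blast
        have "forest_compat (fla_sum A1 A2) f w"
          unfolding forest_compat_fla_sum[OF wf] using ds merge[OF ds(1)] by (intro exI[of _ ds]) auto
        with ds merge[OF ds(1)] show "w \<in> ?W" by simp
      qed
      show "?W \<subseteq> ?merge ` ?D"
      proof
        fix w assume w: "w \<in> ?W"
        then obtain ds where ds: "list_all2 (decomp_of S ar) ds f" "map isl w = concat (map decomp_mask ds)"
          "forest_compat A1 (map fst ds) (restr_l w)" "forest_compat A2 (concat (map snd ds)) (restr_r w)"
          using forest_compat_fla_sum[OF wf] by blast
        then have "ds \<in> ?D" "w = ?merge ds" using w merge_words_isl_restr[of w] by auto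
        then show "w \<in> ?merge ` ?D" by blast
      qed
    qed
  qed
  then show ?thesis by (rule bij_betw_same_card[symmetric])
qed

lemma sum_indicator_eq_card:
  "finite A \<Longrightarrow> (\<Sum>x\<in>A. if P x then (1::'k::semiring_1) else 0) = of_nat (card {x\<in>A. P x})"
  by (simp add: sum.inter_filter[symmetric])

lemma forest_compat_rd: "forest_compat A (rd f) w \<longleftrightarrow> forest_compat A f w"
  by (induction f arbitrary: w) (auto simp: rd_def)

definition decomp_pair :: "('s tm \<times> 's tm list) list \<Rightarrow> 's forest \<times> 's forest" where
  "decomp_pair ds = (rd (map fst ds), rd (concat (map snd ds)))"

lemma Delta_basis_eq_card:
  "Delta_basis S ar f q = of_nat (card {ds. list_all2 (decomp_of S ar) ds f \<and> decomp_pair ds = q})"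
proof -
  obtain g h where q: "q = (g, h)" by (cases q)
  have rd: "concat (map (\<lambda>d. rd [fst d]) ds) = rd (map fst ds)"
    "concat (map (\<lambda>d. rd (snd d)) ds) = rd (concat (map snd ds))" for ds :: "('s tm \<times> 's tm list) list"
    by (induction ds) (auto simp: rd_def)
  have "{ds. length ds = length f \<and> (\<forall>i<length f. ds ! i \<in> decomps S ar (f ! i))
      \<and> concat (map (\<lambda>d. rd [fst d]) ds) = g \<and> concat (map (\<lambda>d. rd (snd d)) ds) = h}
    = {ds. list_all2 (decomp_of S ar) ds f \<and> decomp_pair ds = q}"
    by (auto simp: q rd decomp_pair_def list_all2_conv_all_nth)
  then show ?thesis by (simp add: Delta_basis_def q)
qed

lemma sum_Delta_basis:
  assumes "wf_forest S ar f" and "finite Q" and "decomp_pair ` {ds. list_all2 (decomp_of S ar) ds f} \<subseteq> Q"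
  shows "(\<Sum>q\<in>Q. Delta_basis S ar f q * g q) = (\<Sum>ds | list_all2 (decomp_of S ar) ds f. g (decomp_pair ds))"
proof -
  let ?D = "{ds. list_all2 (decomp_of S ar) ds f}"
  have fD: "finite ?D" using finite_forest_decomps[OF assms(1)] .
  have "(\<Sum>q\<in>Q. Delta_basis S ar f q * g q) = (\<Sum>q\<in>decomp_pair ` ?D. Delta_basis S ar f q * g q)"
  proof (rule sum.mono_neutral_right)
    show "\<forall>q\<in>Q - decomp_pair ` ?D. Delta_basis S ar f q * g q = 0"
    proof
      fix q assume "q \<in> Q - decomp_pair ` ?D"
      then have empty: "{ds. list_all2 (decomp_of S ar) ds f \<and> decomp_pair ds = q} = {}" by auto
      show "Delta_basis S ar f q * g q = 0" unfolding Delta_basis_eq_card empty by simp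
    qed
  qed (use assms(2,3) in auto)
  also have "\<dots> = (\<Sum>q\<in>decomp_pair ` ?D. \<Sum>ds\<in>{ds\<in>?D. decomp_pair ds = q}. g (decomp_pair ds))"
    by (intro sum.cong) (auto simp: Delta_basis_eq_card)
  also have "\<dots> = (\<Sum>ds\<in>?D. g (decomp_pair ds))"
    by (rule sum.group[OF fD]) (use fD in auto)
  finally show ?thesis by simp
qed

lemma theta_r_map_fla_sum_eq:
  fixes A1 :: "('s, 'a) fla" and A2 :: "('s, 'b) fla" and x :: "'s forest \<Rightarrow> 'k::field_char_0"
  shows "theta (r_map (fla_sum A1 A2) x) (u, v) = (\<Sum>f | x f \<noteq> 0. x f *
    of_nat (card {w. restr_l w = u \<and> restr_r w = v \<and> forest_compat (fla_sum A1 A2) f w}))"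
proof -
  let ?W = "{w :: ('a + 'b) list. restr_l w = u \<and> restr_r w = v}"
  have "theta (r_map (fla_sum A1 A2) x) (u, v) = (\<Sum>f | x f \<noteq> 0. \<Sum>w\<in>?W. x f * r_basis (fla_sum A1 A2) f w)"
    by (simp add: theta_def r_map_def sum.swap[of _ ?W])
  also have "\<dots> = (\<Sum>f | x f \<noteq> 0. x f * of_nat (card {w\<in>?W. forest_compat (fla_sum A1 A2) f w}))"
    by (simp add: sum_distrib_left[symmetric] r_basis_eq sum_indicator_eq_card[OF finite_interleavings])
  finally show ?thesis by (simp add: conj_assoc)
qed

lemma r_tensor_Delta_eq:
  fixes A1 :: "('s, 'a) fla" and A2 :: "('s, 'b) fla" and x :: "'s forest \<Rightarrow> 'k::field_char_0"
  assumes N: "N_elem S ar x"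
  shows "r_tensor A1 A2 (Delta S ar x) (u, v) = (\<Sum>f | x f \<noteq> 0. x f * of_nat (card
    {ds. list_all2 (decomp_of S ar) ds f \<and> forest_compat A1 (map fst ds) u \<and> forest_compat A2 (concat (map snd ds)) v}))"
proof -
  let ?X = "{f. x f \<noteq> 0}"
  let ?Q = "\<Union>f\<in>?X. decomp_pair ` {ds. list_all2 (decomp_of S ar) ds f}"
  define g where "g q = r_basis A1 (fst q) u * (r_basis A2 (snd q) v :: 'k)" for q
  have fX: "finite ?X" and wf: "\<And>f. x f \<noteq> 0 \<Longrightarrow> wf_forest S ar f" using N by (auto simp: N_elem_def)
  have ind: "(if P then 1 else 0) * (if P' then 1 else 0) = (if P \<and> P' then 1 else (0::'k))" for P P'
    by simp
  have fQ: "finite ?Q" using fX finite_forest_decomps wf by blast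
  have supp: "{q. Delta S ar x q \<noteq> 0} \<subseteq> ?Q"
  proof
    fix q assume "q \<in> {q. Delta S ar x q \<noteq> 0}"
    then obtain f where "f \<in> ?X" "Delta_basis S ar f q \<noteq> (0::'k)"
      unfolding Delta_def by (auto intro: sum.not_neutral_contains_not_neutral)
    then obtain ds where "f \<in> ?X" "list_all2 (decomp_of S ar) ds f" "decomp_pair ds = q"
      by (auto simp: Delta_basis_eq_card card_eq_0_iff)
    then show "q \<in> ?Q" by blast
  qed
  have "r_tensor A1 A2 (Delta S ar x) (u, v) = (\<Sum>q\<in>?Q. Delta S ar x q * g q)"
    unfolding r_tensor_def g_def by (simp add: mult.assoc) (rule sum.mono_neutral_left[OF fQ supp]; simp)
  also have "\<dots> = (\<Sum>f\<in>?X. x f * (\<Sum>q\<in>?Q. Delta_basis S ar f q * g q))"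
    by (simp add: Delta_def sum_distrib_right sum_distrib_left mult.assoc sum.swap[of _ ?Q])
  also have "\<dots> = (\<Sum>f\<in>?X. x f * (\<Sum>ds | list_all2 (decomp_of S ar) ds f. g (decomp_pair ds)))"
    using wf fQ by (intro sum.cong refl arg_cong[where f = "(*) _"] sum_Delta_basis) auto
  also have "\<dots> = (\<Sum>f\<in>?X. x f * of_nat (card {ds. list_all2 (decomp_of S ar) ds f
      \<and> forest_compat A1 (map fst ds) u \<and> forest_compat A2 (concat (map snd ds)) v}))"
    by (intro sum.cong refl)
      (simp add: g_def decomp_pair_def r_basis_eq forest_compat_rd ind sum_indicator_eq_card
        finite_forest_decomps wf conj_assoc)
  finally show ?thesis by simp
qed

lemma theta_r_map_fla_sum:
  fixes A1 :: "('s, 'a) fla" and A2 :: "('s, 'b) fla" and x :: "'s forest \<Rightarrow> 'k::field_char_0"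
  assumes N: "N_elem S ar x"
  shows "theta (r_map (fla_sum A1 A2) x) = r_tensor A1 A2 (Delta S ar x)"
proof
  fix p :: "'a list \<times> 'b list"
  obtain u v where p: "p = (u, v)" by (cases p)
  have wf: "wf_forest S ar f" if "x f \<noteq> 0" for f using N that by (simp add: N_elem_def)
  show "theta (r_map (fla_sum A1 A2) x) p = r_tensor A1 A2 (Delta S ar x) p"
    unfolding p theta_r_map_fla_sum_eq r_tensor_Delta_eq[OF N]
    by (intro sum.cong refl) (simp add: card_compat_words_eq_card_decomps wf)
qed

theorem theorem4p8:
  fixes S :: "'s set" and ar :: "'s \<Rightarrow> nat"
  shows
    "(\<forall>(A1 :: ('s, 'a) fla) (A2 :: ('s, 'b) fla) (A3 :: ('s, 'c) fla).
        is_fla S A1 \<and> is_fla S A2 \<and> is_fla S A3 \<longrightarrow>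
        fla_map sum_assoc (fla_sum (fla_sum A1 A2) A3) = fla_sum A1 (fla_sum A2 A3))
     \<and>
     (\<forall>A :: ('s, 'a) fla. is_fla S A \<longrightarrow>
        (\<forall>x :: 's forest \<Rightarrow> 'k::field_char_0. N_elem S ar x \<longrightarrow> kpoly A (r_map A x))
      \<and> r_map A (N_unit :: 's forest \<Rightarrow> 'k) = poly_one
      \<and> (\<forall>x y :: 's forest \<Rightarrow> 'k. N_elem S ar x \<longrightarrow> N_elem S ar y \<longrightarrow>
           r_map A (N_mult x y) = poly_mult (r_map A x) (r_map A y))
      \<and> (\<forall>(x :: 's forest \<Rightarrow> 'k) n. N_elem S ar x \<longrightarrow> N_homog n x \<longrightarrow>
           poly_homog n (r_map A x)))
     \<and>
     (\<forall>(A1 :: ('s, 'a) fla) (A2 :: ('s, 'b) fla) (x :: 's forest \<Rightarrow> 'k).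
        is_fla S A1 \<and> is_fla S A2 \<and> N_elem S ar x \<longrightarrow>
        theta (r_map (fla_sum A1 A2) x) = r_tensor A1 A2 (Delta S ar x))
     \<and>
     (\<forall>x y :: 's forest \<Rightarrow> 'k. N_elem S ar x \<longrightarrow> N_elem S ar y \<longrightarrow>
        r_map (A_pos S) x = r_map (A_pos S) y \<longrightarrow> x = y)"
proof (intro conjI allI impI)
  fix A1 :: "('s, 'a) fla" and A2 :: "('s, 'b) fla" and A3 :: "('s, 'c) fla"
  show "fla_map sum_assoc (fla_sum (fla_sum A1 A2) A3) = fla_sum A1 (fla_sum A2 A3)"
    by (rule fla_sum_assoc)
next
  fix A :: "('s, 'a) fla" and x y :: "'s forest \<Rightarrow> 'k" and n
  show "r_map A (N_unit :: 's forest \<Rightarrow> 'k) = poly_one" by (rule r_map_N_unit)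
  show "N_homog n x \<Longrightarrow> poly_homog n (r_map A x)" by (rule poly_homog_r_map)
  assume "N_elem S ar x"
  then show "kpoly A (r_map A x)" by (intro kpoly_r_map) (simp add: N_elem_def)
  assume "N_elem S ar y"
  with \<open>N_elem S ar x\<close> show "r_map A (N_mult x y) = poly_mult (r_map A x) (r_map A y)"
    by (intro r_map_N_mult) (simp_all add: N_elem_def)
next
  fix A1 :: "('s, 'a) fla" and A2 :: "('s, 'b) fla" and x :: "'s forest \<Rightarrow> 'k"
  assume "is_fla S A1 \<and> is_fla S A2 \<and> N_elem S ar x"
  then show "theta (r_map (fla_sum A1 A2) x) = r_tensor A1 A2 (Delta S ar x)"
    by (intro theta_r_map_fla_sum) simp
next
  fix x y :: "'s forest \<Rightarrow> 'k"
  assume "N_elem S ar x" "N_elem S ar y" "r_map (A_pos S) x = r_map (A_pos S) y"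
  then show "x = y" by (rule r_map_A_pos_inj)
qed

end
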